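(* Let $\Omega\subset\mathbb{C}^n$ be a domain with $C^4$ boundary, $p\in b\Omega$ and $X,Y\in T_p(b\Omega)$. If $L,L',\tilde L,\tilde L'\in\tilde K^{1,0}_p$ satisfy $L(p)=\tilde L(p)$, $L'(p)=\tilde L'(p)$ and $L(p),L'(p)\in K^{1,0}_{p,X}\cap K^{1,0}_{p,Y}$, then $\tau^4_p(X,Y,L,\bar L')=\tau^4_p(X,Y,\tilde L,\bar{\tilde L}')$. That is, $\tau^4_p(X,Y,\cdot,\cdot)$ is a well-defined tensor on $(K^{1,0}_{p,X}\cap K^{1,0}_{p,Y})\times(K^{0,1}_{p,X}\cap K^{0,1}_{p,Y})$.
   Context: Use the Euclidean metric on $\mathbb{C}^n$ normalized so $|dz_j|=1$; $\rho$ is a $C^4$ defining function for $\Omega$ normalized so $|d\rho|=1$ on $b\Omega$. $T_p(b\Omega)$ is the real tangent space, $T^{1,0}_p(b\Omega)=\{\sum_j a^j\partial/\partial z_j:\sum_j a^j\partial\rho/\partial z_j(p)=0\}$. The Levi form is $\mathcal{L}(L,\bar L')=\sum_{j,k}\frac{\partial^2\rho}{\partial z_j\partial\bar z_k}a^j\bar b^k$ on $T^{1,0}(b\Omega)$, with eigenvalues $\mu_1\leq\dots\leq\mu_{n-1}$; $K^{1,0}_p$ is its kernel at $p$. For real $X\in T_p(b\Omega)$ and $L,L'\in K^{1,0}_p$, $\tau^3_p(X,L,\bar L')=X(\mathcal{L}(L,\bar L'))|_p$, and $K^{1,0}_{p,X}=\{L\in K^{1,0}_p:\tau^3_p(X,L,\bar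 L')=0\ \forall L'\in K^{1,0}_p\}$; $K^{0,1}_{p,X}$ is its complex conjugate. Let $U_p$ be a neighborhood of $p$ in $b\Omega$ on which $\mu_k\neq\mu_j$ whenever $\mu_k(p)\neq0$ and $\mu_j(p)=0$; $\tilde K^{1,0}_p$ is the space of sections of $T^{1,0}(b\Omega)$ over $U_p$ with $C^2$ coefficients lying pointwise in the span of the eigenvectors of $\mathcal{L}$ for the eigenvalues $\mu_j$ with $\mu_j(p)=0$. With $\nabla$ the Euclidean connection, $\nabla^b_XY$ the tangential part of $\nabla_XY$ for vector fields $X,Y$ tangent to $b\Omega$, and $\mathrm{Hess}^b(X,Y)=XY-\nabla^b_XY$, define for $X,Y\in T_p(b\Omega)$ and $L,L'\in\tilde K^{1,0}_p$: $\tau^4_p(X,Y,L,\bar L')=(\mathrm{Hess}^b(X,Y)\mathcal{L}(L,\bar L'))(p)$. *)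

theory Defs
  imports "HOL-Analysis.Analysis"
begin

fun Ck :: "nat \<Rightarrow> 'a::real_normed_vector set \<Rightarrow> ('a \<Rightarrow> 'b::real_normed_vector) \<Rightarrow> bool" where
  "Ck 0 S f = continuous_on S f"
| "Ck (Suc k) S f = ((\<forall>x\<in>S. f differentiable (at x)) \<and>
                      (\<forall>v. Ck k S (\<lambda>x. frechet_derivative f (at x) v)))"

definition Dir :: "('a::real_normed_vector \<Rightarrow> 'b::real_normed_vector) \<Rightarrow> 'a \<Rightarrow> 'a \<Rightarrow> 'b" where
  "Dir f z v = frechet_derivative f (at z) v"

text \<open>Wirtinger derivatives on C^n (vectors in C^n are elements of complex^'n).\<close>
definition dz :: "'n::finite \<Rightarrow> (complex^'n \<Rightarrow> complex) \<Rightarrow> complex^'n \<Rightarrow> complex" where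
  "dz j f z = (Dir f z (axis j 1) - \<i> * Dir f z (axis j \<i>)) / 2"

definition dzbar :: "'n::finite \<Rightarrow> (complex^'n \<Rightarrow> complex) \<Rightarrow> complex^'n \<Rightarrow> complex" where
  "dzbar j f z = (Dir f z (axis j 1) + \<i> * Dir f z (axis j \<i>)) / 2"

definition cplx :: "(complex^'n \<Rightarrow> real) \<Rightarrow> complex^'n \<Rightarrow> complex" where
  "cplx \<rho> = (\<lambda>w. complex_of_real (\<rho> w))"

text \<open>|d rho| in the metric with |dz_j| = 1: |d rho|^2 = sum |rho_j|^2 + |rho_{jbar}|^2.\<close>
definition dnorm :: "(complex^'n::finite \<Rightarrow> real) \<Rightarrow> complex^'n \<Rightarrow> real" where
  "dnorm \<rho> z = sqrt (\<Sum>j\<in>UNIV. (cmod (dz j (cplx \<rho>) z))\<^sup>2 + (cmod (dzbar j (cplx \<rho>) z))\<^sup>2)"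

definition defining_function :: "(complex^'n::finite) set \<Rightarrow> (complex^'n \<Rightarrow> real) \<Rightarrow> (complex^'n) set \<Rightarrow> bool" where
  "defining_function \<Omega> \<rho> V \<longleftrightarrow> open V \<and> frontier \<Omega> \<subseteq> V \<and> Ck 4 V \<rho> \<and>
     (\<forall>z\<in>V. z \<in> \<Omega> \<longleftrightarrow> \<rho> z < 0) \<and> (\<forall>z\<in>frontier \<Omega>. dnorm \<rho> z = 1)"

text \<open>Real tangent space T_z(b Omega) (as real vectors in C^n = R^2n).\<close>
definition Tb :: "(complex^'n::finite \<Rightarrow> real) \<Rightarrow> complex^'n \<Rightarrow> (complex^'n) set" where
  "Tb \<rho> z = {v. Dir \<rho> z v = 0}"

text \<open>T^{1,0}_z(b Omega), vectors given by their coefficients a^j.\<close>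
definition T10 :: "(complex^'n::finite \<Rightarrow> real) \<Rightarrow> complex^'n \<Rightarrow> (complex^'n) set" where
  "T10 \<rho> z = {a. (\<Sum>j\<in>UNIV. a$j * dz j (cplx \<rho>) z) = 0}"

definition levi_coef :: "(complex^'n::finite \<Rightarrow> real) \<Rightarrow> complex^'n \<Rightarrow> 'n \<Rightarrow> 'n \<Rightarrow> complex" where
  "levi_coef \<rho> z j k = dz j (dzbar k (cplx \<rho>)) z"

definition levi :: "(complex^'n::finite \<Rightarrow> real) \<Rightarrow> complex^'n \<Rightarrow> complex^'n \<Rightarrow> complex^'n \<Rightarrow> complex" where
  "levi \<rho> z a b = (\<Sum>j\<in>UNIV. \<Sum>k\<in>UNIV. levi_coef \<rho> z j k * a$j * cnj (b$k))"

text \<open>Hermitian inner product with |d/dz_j| = 1.\<close>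
definition herm :: "complex^'n::finite \<Rightarrow> complex^'n \<Rightarrow> complex" where
  "herm a b = (\<Sum>j\<in>UNIV. a$j * cnj (b$j))"

definition cspan :: "(complex^'n::finite) set \<Rightarrow> (complex^'n) set" where
  "cspan S = {v. \<exists>F c. finite F \<and> F \<subseteq> S \<and> v = (\<Sum>a\<in>F. c a *s a)}"

text \<open>mu 0 <= ... <= mu (n-2) are the eigenvalues (with multiplicity) of the Levi form on
  T^{1,0}_z: there is an orthonormal basis of T^{1,0}_z diagonalizing it.\<close>
definition levi_eigenvalues :: "(complex^'n::finite \<Rightarrow> real) \<Rightarrow> complex^'n \<Rightarrow> (nat \<Rightarrow> real) \<Rightarrow> bool" where
  "levi_eigenvalues \<rho> z \<mu> \<longleftrightarrow>
     (\<forall>i j. i \<le> j \<longrightarrow> j < CARD('n) - 1 \<longrightarrow> \<mu> i \<le> \<mu> j) \<and>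
     (\<exists>e :: nat \<Rightarrow> complex^'n.
        (\<forall>i < CARD('n) - 1. e i \<in> T10 \<rho> z) \<and>
        T10 \<rho> z \<subseteq> cspan (e ` {..<CARD('n) - 1}) \<and>
        (\<forall>i < CARD('n) - 1. \<forall>k < CARD('n) - 1. herm (e i) (e k) = (if i = k then 1 else 0)) \<and>
        (\<forall>i < CARD('n) - 1. \<forall>k < CARD('n) - 1.
            levi \<rho> z (e i) (e k) = (if i = k then complex_of_real (\<mu> i) else 0)))"

definition levi_eigvec :: "(complex^'n::finite \<Rightarrow> real) \<Rightarrow> complex^'n \<Rightarrow> real \<Rightarrow> complex^'n \<Rightarrow> bool" where
  "levi_eigvec \<rho> z lam a \<longleftrightarrow> a \<in> T10 \<rho> z \<and> a \<noteq> 0 \<and>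
     (\<forall>b\<in>T10 \<rho> z. levi \<rho> z a b = complex_of_real lam * herm a b)"

definition Kker :: "(complex^'n::finite \<Rightarrow> real) \<Rightarrow> complex^'n \<Rightarrow> (complex^'n) set" where
  "Kker \<rho> p = {a \<in> T10 \<rho> p. \<forall>b\<in>T10 \<rho> p. levi \<rho> p a b = 0}"

text \<open>K^{1,0}_{p,X}: tau^3_p(X, L, L'bar) = X(L(L, L'bar))|_p, computed with arbitrary C^1
  sections of T^{1,0}(b Omega) near p extending the given vectors.\<close>
definition KX :: "(complex^'n::finite) set \<Rightarrow> (complex^'n \<Rightarrow> real) \<Rightarrow> complex^'n \<Rightarrow> complex^'n \<Rightarrow> (complex^'n) set" where
  "KX \<Omega> \<rho> p X = {a \<in> Kker \<rho> p. \<forall>b\<in>Kker \<rho> p. \<forall>W La Lb.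
      open W \<and> p \<in> W \<and> Ck 1 W La \<and> Ck 1 W Lb \<and> La p = a \<and> Lb p = b \<and>
      (\<forall>z\<in>W \<inter> frontier \<Omega>. La z \<in> T10 \<rho> z \<and> Lb z \<in> T10 \<rho> z) \<longrightarrow>
      Dir (\<lambda>z. levi \<rho> z (La z) (Lb z)) p X = 0}"

text \<open>Elements of tilde K^{1,0}_p over U_p = U \<inter> b Omega (U open in C^n): C^2 sections lying
  pointwise in the span of eigenvectors for the eigenvalues mu_j with mu_j(p) = 0.\<close>
definition Ktilde :: "(complex^'n::finite) set \<Rightarrow> (complex^'n \<Rightarrow> real) \<Rightarrow> (complex^'n \<Rightarrow> nat \<Rightarrow> real)
    \<Rightarrow> complex^'n \<Rightarrow> (complex^'n) set \<Rightarrow> (complex^'n \<Rightarrow> complex^'n) set" where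
  "Ktilde \<Omega> \<rho> \<mu> p U = {L. Ck 2 U L \<and> (\<forall>z\<in>U \<inter> frontier \<Omega>.
      L z \<in> cspan {a. \<exists>j < CARD('n) - 1. \<mu> p j = 0 \<and> levi_eigvec \<rho> z (\<mu> z j) a})}"

definition tangent_field :: "(complex^'n::finite) set \<Rightarrow> (complex^'n \<Rightarrow> real) \<Rightarrow> (complex^'n) set
    \<Rightarrow> (complex^'n \<Rightarrow> complex^'n) \<Rightarrow> bool" where
  "tangent_field \<Omega> \<rho> U F \<longleftrightarrow> Ck 1 U F \<and> (\<forall>z\<in>U \<inter> frontier \<Omega>. F z \<in> Tb \<rho> z)"

definition grad :: "(complex^'n::finite \<Rightarrow> real) \<Rightarrow> complex^'n \<Rightarrow> complex^'n" where
  "grad \<rho> z = (\<chi> j. complex_of_real (Dir \<rho> z (axis j 1)) + \<i> * complex_of_real (Dir \<rho> z (axis j \<i>)))"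

definition tang :: "(complex^'n::finite \<Rightarrow> real) \<Rightarrow> complex^'n \<Rightarrow> complex^'n \<Rightarrow> complex^'n" where
  "tang \<rho> z v = v - (inner v (grad \<rho> z) / inner (grad \<rho> z) (grad \<rho> z)) *\<^sub>R grad \<rho> z"

text \<open>tau^4_p(X,Y,L,L'bar) = (Hess^b(X,Y) L(L,L'bar))(p) = XY g - (nabla^b_X Y) g at p,
  where Xf, Yf are tangent vector fields (extending X, Y).\<close>
definition tau4 :: "(complex^'n::finite \<Rightarrow> real) \<Rightarrow> (complex^'n \<Rightarrow> complex^'n) \<Rightarrow> (complex^'n \<Rightarrow> complex^'n)
    \<Rightarrow> (complex^'n \<Rightarrow> complex^'n) \<Rightarrow> (complex^'n \<Rightarrow> complex^'n) \<Rightarrow> complex^'n \<Rightarrow> complex" where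
  "tau4 \<rho> Xf Yf L L' p =
     (let g = (\<lambda>z. levi \<rho> z (L z) (L' z));
          Yg = (\<lambda>z. Dir g z (Yf z));
          nabla = Dir Yf p (Xf p)
      in Dir Yg p (Xf p) - Dir g p (tang \<rho> p nabla))"

end

(* Write D = L - L~ and D' = L' - L~'. Both are C^2 sections of the span of the Levi
   eigenvectors whose eigenvalues vanish at p, and both vanish at p. On the boundary,
   sesquilinearity and hermitian symmetry of the Levi form give
     Levi(L, L') = Levi(L~, L~') + Levi(D, L') + conj Levi(D', L~),
   so it suffices that the tangential Hessian at p of Levi(D, M) vanishes whenever M(p) lies
   in K_{p,X} and K_{p,Y}.
   First derivatives: every tangential derivative of D at p lies in the Levi kernel K_p.
   It lies in T^{1,0}_p because D stays in T^{1,0} along the boundary, and it is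
   Levi-orthogonal to T^{1,0}_p because Levi(D, .) is o(|w - p|) along the boundary:
   D = O(|w - p|), and by a min-max comparison the eigenvalues vanishing at p are small near p.
   Second derivatives: the defining property of K_{p,X} and K_{p,Y}, together with hermitian
   symmetry, reduces X (Y Levi(D, M))(p) to Levi(V, M(p)) for a vector V; differentiating
   d rho(D) = 0 twice along the boundary puts V in T^{1,0}_p, so the term vanishes because
   M(p) is in the Levi kernel.
   Tangential derivatives of functions vanishing on the boundary vanish because the boundary
   is a regular level set of rho. *)

theory Submission
  imports Defs
begin

section \<open>Directional derivatives and \<open>C\<^sup>k\<close> functions\<close>

lemma Dir_eq_frechet_derivative: "Dir f x = frechet_derivative f (at x)"
  by (rule ext) (simp add: Dir_def)

lemma has_derivative_imp_Dir_eq: "(f has_derivative f') (at x) \<Longrightarrow> Dir f x = f'"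
  by (simp add: Dir_eq_frechet_derivative frechet_derivative_at[symmetric])

lemma differentiable_imp_has_derivative_Dir:
  "f differentiable (at x) \<Longrightarrow> (f has_derivative Dir f x) (at x)"
  by (simp add: Dir_eq_frechet_derivative frechet_derivative_works[symmetric])

lemma Ck_Suc_has_derivative: "Ck (Suc k) S f \<Longrightarrow> x \<in> S \<Longrightarrow> (f has_derivative Dir f x) (at x)"
  by (simp add: differentiable_imp_has_derivative_Dir)

lemma Ck_Suc_Dir: "Ck (Suc k) S f \<Longrightarrow> Ck k S (\<lambda>x. Dir f x v)"
  by (simp add: Dir_def)

lemma Ck_Suc_imp_Ck: "Ck (Suc k) S f \<Longrightarrow> Ck k S f"
proof (induction k arbitrary: f)
  case 0
  then show ?case
    by (auto intro!: continuous_at_imp_continuous_on differentiable_imp_continuous_within)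
next
  case (Suc k)
  then show ?case by auto
qed

lemma Ck_mono: "j \<le> k \<Longrightarrow> Ck k S f \<Longrightarrow> Ck j S f"
  by (induction k rule: dec_induct) (blast dest: Ck_Suc_imp_Ck)+

lemma Ck_has_derivative:
  assumes "Ck k S f" "x \<in> S" "k \<noteq> 0"
  shows "(f has_derivative Dir f x) (at x)"
  using assms Ck_Suc_has_derivative by (cases k) auto

lemma Ck_Dir_differentiable:
  assumes "Ck k S f" "x \<in> S" "1 < k"
  shows "(\<lambda>z. Dir f z v) differentiable (at x)"
proof -
  obtain k' where "k = Suc (Suc k')" using assms(3) by (metis less_imp_Suc_add plus_1_eq_Suc)
  then show ?thesis using Ck_Suc_Dir[of "Suc k'" S f v] assms(1,2) by simp
qed

lemma Ck_subset: "Ck k S f \<Longrightarrow> T \<subseteq> S \<Longrightarrow> Ck k T f"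
proof (induction k arbitrary: f)
  case 0 then show ?case using continuous_on_subset by auto
next
  case (Suc k) then show ?case by auto
qed

lemma differentiable_transform_within_open:
  assumes "open S" "x \<in> S" "\<And>y. y \<in> S \<Longrightarrow> f y = g y" "f differentiable (at x)"
  shows "g differentiable (at x)"
proof -
  obtain f' where "(f has_derivative f') (at x)" using assms(4) unfolding differentiable_def by blast
  then have "(g has_derivative f') (at x)"
    by (rule has_derivative_transform_within_open[OF _ assms(1,2)]) (simp add: assms(3))
  then show ?thesis unfolding differentiable_def by blast
qed

lemma Dir_transform_within_open:
  assumes "open S" "x \<in> S" "\<And>y. y \<in> S \<Longrightarrow> f y = g y"
  shows "Dir f x = Dir g x"
proof -
  have "(f has_derivative f') (at x) = (g has_derivative f') (at x)" for f'
  proof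
    assume "(f has_derivative f') (at x)"
    then show "(g has_derivative f') (at x)"
      by (rule has_derivative_transform_within_open[OF _ assms(1,2)]) (simp add: assms(3))
  next
    assume "(g has_derivative f') (at x)"
    then show "(f has_derivative f') (at x)"
      by (rule has_derivative_transform_within_open[OF _ assms(1,2)]) (simp add: assms(3))
  qed
  then show ?thesis by (simp add: Dir_eq_frechet_derivative frechet_derivative_def)
qed

lemma Ck_cong:
  assumes "open S" "\<And>x. x \<in> S \<Longrightarrow> f x = g x"
  shows "Ck k S f = Ck k S g"
  using assms(2)
proof (induction k arbitrary: f g)
  case 0 then show ?case using continuous_on_cong by auto
next
  case (Suc k)
  have d: "\<And>x. x \<in> S \<Longrightarrow> (f differentiable (at x)) = (g differentiable (at x))"
    using differentiable_transform_within_open[OF assms(1), of _ f g]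
      differentiable_transform_within_open[OF assms(1), of _ g f] Suc.prems by auto
  have e: "\<And>x. x \<in> S \<Longrightarrow> Dir f x = Dir g x"
    using Dir_transform_within_open[OF assms(1), of _ f g] Suc.prems by auto
  have "\<And>v. Ck k S (\<lambda>x. Dir f x v) = Ck k S (\<lambda>x. Dir g x v)"
    by (rule Suc.IH) (simp add: e)
  then show ?case using d by (simp add: Dir_eq_frechet_derivative[symmetric])
qed

lemma Ck_const: "Ck k S (\<lambda>x. c)"
proof (induction k arbitrary: c)
  case 0 then show ?case by simp
next
  case (Suc k)
  have "\<And>x v. Dir (\<lambda>x. c) x v = 0" by (simp add: Dir_def)
  then show ?case using Suc by (simp add: Dir_eq_frechet_derivative[symmetric])
qed

lemma Ck_SucI:
  assumes "open S" "\<And>x. x \<in> S \<Longrightarrow> (f has_derivative f' x) (at x)" "\<And>v. Ck k S (\<lambda>x. f' x v)"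
  shows "Ck (Suc k) S f"
proof -
  have "Ck k S (\<lambda>x. Dir f x v) = Ck k S (\<lambda>x. f' x v)" for v
    by (rule Ck_cong[OF assms(1)]) (simp add: has_derivative_imp_Dir_eq[OF assms(2)])
  then show ?thesis
    using assms(2,3) by (auto simp: differentiable_def Dir_eq_frechet_derivative[symmetric])
qed

lemma Ck_add:
  assumes "open S"
  shows "Ck k S f \<Longrightarrow> Ck k S g \<Longrightarrow> Ck k S (\<lambda>x. f x + g x)"
proof (induction k arbitrary: f g)
  case 0 then show ?case by (simp add: continuous_on_add)
next
  case (Suc k)
  show ?case
  proof (rule Ck_SucI[OF assms])
    show "((\<lambda>x. f x + g x) has_derivative (\<lambda>v. Dir f x v + Dir g x v)) (at x)" if "x \<in> S" for x
      using Ck_Suc_has_derivative[OF Suc.prems(1) that] Ck_Suc_has_derivative[OF Suc.prems(2) that]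
      by (rule has_derivative_add)
    show "Ck k S (\<lambda>x. Dir f x v + Dir g x v)" for v
      using Suc.IH Ck_Suc_Dir Suc.prems by blast
  qed
qed

lemma Ck_bounded_linear:
  assumes "open S" "bounded_linear T"
  shows "Ck k S f \<Longrightarrow> Ck k S (\<lambda>x. T (f x))"
proof (induction k arbitrary: f)
  case 0 then show ?case
    using continuous_on_compose2[OF linear_continuous_on[OF assms(2)]] by auto
next
  case (Suc k)
  show ?case
  proof (rule Ck_SucI[OF assms(1)])
    show "((\<lambda>x. T (f x)) has_derivative (\<lambda>v. T (Dir f x v))) (at x)" if "x \<in> S" for x
      using Ck_Suc_has_derivative[OF Suc.prems that] by (rule bounded_linear.has_derivative[OF assms(2)])
    show "Ck k S (\<lambda>x. T (Dir f x v))" for v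
      using Suc.IH Ck_Suc_Dir Suc.prems by blast
  qed
qed

lemma Ck_bounded_bilinear:
  assumes "open S" "bounded_bilinear bil"
  shows "Ck k S f \<Longrightarrow> Ck k S g \<Longrightarrow> Ck k S (\<lambda>x. bil (f x) (g x))"
proof (induction k arbitrary: f g)
  case 0 then show ?case
    using bounded_bilinear.continuous_on[OF assms(2)] by auto
next
  case (Suc k)
  have fg: "Ck k S f" "Ck k S g" using Ck_Suc_imp_Ck Suc.prems by blast+
  show ?case
  proof (rule Ck_SucI[OF assms(1)])
    show "((\<lambda>x. bil (f x) (g x)) has_derivative (\<lambda>v. bil (f x) (Dir g x v) + bil (Dir f x v) (g x))) (at x)"
      if "x \<in> S" for x
      using Ck_Suc_has_derivative[OF Suc.prems(1) that] Ck_Suc_has_derivative[OF Suc.prems(2) that]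
      by (rule bounded_bilinear.FDERIV[OF assms(2)])
    show "Ck k S (\<lambda>x. bil (f x) (Dir g x v) + bil (Dir f x v) (g x))" for v
    proof (rule Ck_add[OF assms(1)])
      have "Ck k S (\<lambda>x. Dir f x v)" "Ck k S (\<lambda>x. Dir g x v)" using Ck_Suc_Dir Suc.prems by blast+
      then show "Ck k S (\<lambda>x. bil (f x) (Dir g x v))" "Ck k S (\<lambda>x. bil (Dir f x v) (g x))"
        using Suc.IH fg by blast+
    qed
  qed
qed

lemma Ck_sum:
  assumes "open S" "finite A"
  shows "(\<And>i. i \<in> A \<Longrightarrow> Ck k S (f i)) \<Longrightarrow> Ck k S (\<lambda>x. \<Sum>i\<in>A. f i x)"
  using assms(2)
proof (induction A rule: finite_induct)
  case empty then show ?case by (simp add: Ck_const)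
next
  case (insert a A)
  then show ?case by (simp, intro Ck_add[OF assms(1)]) auto
qed

lemma Ck_mult:
  fixes f g :: "'a::real_normed_vector \<Rightarrow> 'b::real_normed_algebra"
  shows "open S \<Longrightarrow> Ck k S f \<Longrightarrow> Ck k S g \<Longrightarrow> Ck k S (\<lambda>x. f x * g x)"
  using Ck_bounded_bilinear[OF _ bounded_bilinear_mult] by blast

lemma Ck_const_mult:
  fixes f :: "'a::real_normed_vector \<Rightarrow> 'b::real_normed_algebra"
  shows "open S \<Longrightarrow> Ck k S f \<Longrightarrow> Ck k S (\<lambda>x. c * f x)"
  using Ck_mult[OF _ Ck_const] by blast

lemma Ck_cnj: "open S \<Longrightarrow> Ck k S f \<Longrightarrow> Ck k S (\<lambda>x. cnj (f x))"
  using Ck_bounded_linear[OF _ bounded_linear_cnj] by blast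

lemma Ck_of_real: "open S \<Longrightarrow> Ck k S f \<Longrightarrow> Ck k S (\<lambda>x. complex_of_real (f x))"
  using Ck_bounded_linear[OF _ bounded_linear_of_real] by blast

lemma Ck_diff: "open S \<Longrightarrow> Ck k S f \<Longrightarrow> Ck k S g \<Longrightarrow> Ck k S (\<lambda>x. f x - g x)"
  using Ck_add[of S k f "\<lambda>x. - g x"] Ck_bounded_linear[OF _ bounded_linear_minus[OF bounded_linear_ident], of S k g]
  by simp

lemma bounded_linear_axis: "bounded_linear (axis j :: 'a::euclidean_space \<Rightarrow> 'a^'n::finite)"
proof -
  have "linear (axis j :: 'a \<Rightarrow> 'a^'n)"
    by (rule linearI) (simp_all add: axis_def vec_eq_iff)
  then show ?thesis by (simp add: linear_conv_bounded_linear)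
qed

lemma Ck_vec:
  fixes f :: "'n::finite \<Rightarrow> 'a::real_normed_vector \<Rightarrow> 'b::euclidean_space"
  assumes "open S" "\<And>j. Ck k S (f j)"
  shows "Ck k S (\<lambda>x. \<chi> j. f j x)"
proof -
  have "(\<chi> j. f j x) = (\<Sum>j\<in>UNIV. axis j (f j x))" for x
    by (simp add: vec_eq_iff sum_component axis_def)
  moreover have "Ck k S (\<lambda>x. \<Sum>j\<in>UNIV. axis j (f j x))"
    by (intro Ck_sum[OF assms(1)] Ck_bounded_linear[OF assms(1) bounded_linear_axis] assms(2)) simp
  ultimately show ?thesis by simp
qed

lemma differentiable_Dir_along:
  fixes f :: "'a::euclidean_space \<Rightarrow> 'b::real_normed_vector"
  assumes "open S" "p \<in> S" "\<And>z. z \<in> S \<Longrightarrow> f differentiable (at z)"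
    "\<And>b. b \<in> Basis \<Longrightarrow> (\<lambda>z. Dir f z b) differentiable (at p)"
    "W differentiable (at p)"
  shows "(\<lambda>z. Dir f z (W z)) differentiable (at p)"
proof -
  have eq: "Dir f z (W z) = (\<Sum>b\<in>Basis. (W z \<bullet> b) *\<^sub>R Dir f z b)" if "z \<in> S" for z
  proof -
    have lin: "linear (Dir f z)"
      using assms(3)[OF that] linear_frechet_derivative by (simp add: Dir_eq_frechet_derivative)
    have "Dir f z (W z) = Dir f z (\<Sum>b\<in>Basis. (W z \<bullet> b) *\<^sub>R b)" by (simp add: euclidean_representation)
    also have "\<dots> = (\<Sum>b\<in>Basis. (W z \<bullet> b) *\<^sub>R Dir f z b)"
      using lin by (simp add: linear_sum linear_scale)
    finally show ?thesis .
  qed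
  have "(\<lambda>z. \<Sum>b\<in>Basis. (W z \<bullet> b) *\<^sub>R Dir f z b) differentiable (at p)"
    using assms(4,5) by (auto intro!: differentiable_sum differentiable_scaleR differentiable_inner)
  then show ?thesis
    using differentiable_transform_within_open[OF assms(1,2)] eq by (metis (no_types, lifting))
qed

lemma Ck_Dir_along_has_derivative:
  fixes f :: "'a::euclidean_space \<Rightarrow> 'b::real_normed_vector"
  assumes "Ck k S f" "1 < k" "open S" "p \<in> S" "W differentiable (at p)"
  shows "((\<lambda>z. Dir f z (W z)) has_derivative Dir (\<lambda>z. Dir f z (W z)) p) (at p)"
proof -
  have "f differentiable (at z)" if "z \<in> S" for z
    using Ck_has_derivative[OF assms(1) that] assms(2) differentiableI by fastforce
  then have "(\<lambda>z. Dir f z (W z)) differentiable (at p)"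
    using differentiable_Dir_along[OF assms(3,4) _ _ assms(5)] Ck_Dir_differentiable[OF assms(1,4,2)]
    by blast
  then show ?thesis by (rule differentiable_imp_has_derivative_Dir)
qed

section \<open>Sesquilinear forms given by matrices\<close>

definition sesq :: "complex^'n::finite^'n \<Rightarrow> complex^'n \<Rightarrow> complex^'n \<Rightarrow> complex" where
  "sesq C a b = (\<Sum>j\<in>UNIV. \<Sum>k\<in>UNIV. C$j$k * a$j * cnj (b$k))"

definition matrix_abs_sum :: "complex^'n::finite^'n \<Rightarrow> real" where
  "matrix_abs_sum C = (\<Sum>j\<in>UNIV. \<Sum>k\<in>UNIV. cmod (C$j$k))"

lemma matrix_abs_sum_nonneg: "matrix_abs_sum C \<ge> 0"
  by (simp add: matrix_abs_sum_def sum_nonneg)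

lemma matrix_abs_sum_zero [simp]: "matrix_abs_sum 0 = 0"
  by (simp add: matrix_abs_sum_def)

lemma sesq_diff_matrix: "sesq (C - C') a b = sesq C a b - sesq C' a b"
  by (simp add: sesq_def sum_subtractf ring_distribs)
lemma sesq_add_left: "sesq C (a + a') b = sesq C a b + sesq C a' b"
  by (simp add: sesq_def sum.distrib ring_distribs)
lemma sesq_add_right: "sesq C a (b + b') = sesq C a b + sesq C a b'"
  by (simp add: sesq_def sum.distrib ring_distribs)
lemma sesq_diff_left: "sesq C (a - a') b = sesq C a b - sesq C a' b"
  by (simp add: sesq_def sum_subtractf ring_distribs)
lemma sesq_diff_right: "sesq C a (b - b') = sesq C a b - sesq C a b'"
  by (simp add: sesq_def sum_subtractf ring_distribs)
lemma sesq_zero_left [simp]: "sesq C 0 b = 0"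
  by (simp add: sesq_def)
lemma sesq_zero_right [simp]: "sesq C a 0 = 0"
  by (simp add: sesq_def)
lemma sesq_scale_left: "sesq C (c *s a) b = c * sesq C a b"
  by (simp add: sesq_def sum_distrib_left algebra_simps)
lemma sesq_scale_right: "sesq C a (c *s b) = cnj c * sesq C a b"
  by (simp add: sesq_def sum_distrib_left algebra_simps)
lemma sesq_sum_left: "finite A \<Longrightarrow> sesq C (\<Sum>i\<in>A. f i) b = (\<Sum>i\<in>A. sesq C (f i) b)"
  by (induction A rule: finite_induct) (simp_all add: sesq_add_left)
lemma sesq_sum_right: "finite A \<Longrightarrow> sesq C a (\<Sum>i\<in>A. f i) = (\<Sum>i\<in>A. sesq C a (f i))"
  by (induction A rule: finite_induct) (simp_all add: sesq_add_right)

lemma has_derivative_vec_nth: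
  "(f has_derivative f') F \<Longrightarrow> ((\<lambda>x. f x $ i) has_derivative (\<lambda>h. f' h $ i)) F"
  using bounded_linear.has_derivative[OF bounded_linear_vec_nth] by blast

lemma sesq_has_derivative:
  assumes "(C has_derivative C') (at x)" "(A has_derivative A') (at x)" "(B has_derivative B') (at x)"
  shows "((\<lambda>z. sesq (C z) (A z) (B z)) has_derivative
     (\<lambda>h. sesq (C' h) (A x) (B x) + sesq (C x) (A' h) (B x) + sesq (C x) (A x) (B' h))) (at x)"
proof -
  have c: "((\<lambda>z. C z $ j $ k) has_derivative (\<lambda>h. C' h $ j $ k)) (at x)" for j k
    using has_derivative_vec_nth[OF has_derivative_vec_nth[OF assms(1)]] .
  have a: "((\<lambda>z. A z $ j) has_derivative (\<lambda>h. A' h $ j)) (at x)" for j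
    using has_derivative_vec_nth[OF assms(2)] .
  have b: "((\<lambda>z. cnj (B z $ k)) has_derivative (\<lambda>h. cnj (B' h $ k))) (at x)" for k
    using has_derivative_cnj[OF has_derivative_vec_nth[OF assms(3)]] .
  have "((\<lambda>z. \<Sum>j\<in>UNIV. \<Sum>k\<in>UNIV. C z $ j $ k * A z $ j * cnj (B z $ k)) has_derivative
     (\<lambda>h. \<Sum>j\<in>UNIV. \<Sum>k\<in>UNIV. C x $ j $ k * A x $ j * cnj (B' h $ k) +
          (C x $ j $ k * A' h $ j + C' h $ j $ k * A x $ j) * cnj (B x $ k))) (at x)"
    by (intro has_derivative_sum has_derivative_mult c a b)
  then show ?thesis
    by (simp add: sesq_def sum.distrib ring_distribs add_ac mult_ac)
qed

lemma norm_sesq_le: "norm (sesq C a b) \<le> matrix_abs_sum C * norm a * norm b"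
proof -
  have "norm (sesq C a b) \<le> (\<Sum>j\<in>UNIV. \<Sum>k\<in>UNIV. norm (C$j$k * a$j * cnj (b$k)))"
    unfolding sesq_def by (rule order_trans[OF norm_sum sum_mono]) (rule norm_sum)
  also have "\<dots> \<le> (\<Sum>j\<in>UNIV. \<Sum>k\<in>UNIV. norm (C$j$k) * norm a * norm b)"
  proof (intro sum_mono)
    fix j k
    have "norm (a$j) \<le> norm a" "norm (b$k) \<le> norm b" by (rule Finite_Cartesian_Product.norm_nth_le)+
    then show "norm (C$j$k * a$j * cnj (b$k)) \<le> norm (C$j$k) * norm a * norm b"
      by (simp add: norm_mult mult_mono)
  qed
  also have "\<dots> = matrix_abs_sum C * norm a * norm b"
    by (simp add: matrix_abs_sum_def sum_distrib_right)
  finally show ?thesis .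
qed

section \<open>Derivatives along the boundary of a sublevel set\<close>

lemma norm_scaleR_add_le:
  assumes "0 \<le> t" "\<bar>s\<bar> \<le> \<epsilon> * t"
  shows "norm (t *\<^sub>R X + s *\<^sub>R \<nu>) \<le> t * (norm X + \<epsilon> * norm \<nu>)"
proof -
  have "norm (t *\<^sub>R X + s *\<^sub>R \<nu>) \<le> t * norm X + \<bar>s\<bar> * norm \<nu>"
    using assms(1) norm_triangle_ineq[of "t *\<^sub>R X" "s *\<^sub>R \<nu>"] by simp
  also have "\<dots> \<le> t * norm X + (\<epsilon> * t) * norm \<nu>"
    using assms(2) by (intro add_left_mono mult_right_mono) auto
  finally show ?thesis by (simp add: algebra_simps)
qed

lemma line_meets_frontier:
  fixes z \<nu> :: "'a::real_normed_vector"
  assumes "a \<le> b" "z + a *\<^sub>R \<nu> \<in> S" "z + b *\<^sub>R \<nu> \<notin> S"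
  shows "\<exists>s\<in>{a..b}. z + s *\<^sub>R \<nu> \<in> frontier S"
proof -
  have "connected ((\<lambda>s. z + s *\<^sub>R \<nu>) ` {a..b})"
    by (rule connected_continuous_image) (auto intro!: continuous_intros)
  moreover have "(\<lambda>s. z + s *\<^sub>R \<nu>) ` {a..b} \<inter> S \<noteq> {}" "(\<lambda>s. z + s *\<^sub>R \<nu>) ` {a..b} - S \<noteq> {}"
    using assms by force+
  ultimately show ?thesis using connected_Int_frontier by blast
qed

locale sublevel_boundary =
  fixes \<Omega> V :: "'a::real_normed_vector set" and \<rho> :: "'a \<Rightarrow> real"
  assumes open_domain: "open \<Omega>" and open_nbhd: "open V" and frontier_subset: "frontier \<Omega> \<subseteq> V"
    and domain_iff: "\<And>w. w \<in> V \<Longrightarrow> w \<in> \<Omega> \<longleftrightarrow> \<rho> w < 0"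
    and continuous_rho: "continuous_on V \<rho>"
    and differentiable_rho: "\<And>z. z \<in> frontier \<Omega> \<Longrightarrow> \<rho> differentiable (at z)"
    and transversal: "\<And>z. z \<in> frontier \<Omega> \<Longrightarrow> \<exists>\<nu>. Dir \<rho> z \<nu> = 1"
begin

lemma rho_frontier_zero:
  assumes z0: "z0 \<in> frontier \<Omega>"
  shows "\<rho> z0 = 0"
proof -
  have V: "z0 \<in> V" using z0 frontier_subset by blast
  have "z0 \<notin> \<Omega>" using open_domain z0 by (simp add: frontier_def interior_open)
  then have ge: "\<rho> z0 \<ge> 0" using V domain_iff by auto
  show ?thesis
  proof (rule ccontr)
    assume "\<rho> z0 \<noteq> 0" then have pos: "\<rho> z0 > 0" using ge by auto
    have "continuous (at z0) \<rho>" using open_nbhd V continuous_rho continuous_on_eq_continuous_at by blast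
    then obtain d where d: "d > 0" "\<forall>y. dist y z0 < d \<longrightarrow> dist (\<rho> y) (\<rho> z0) < \<rho> z0"
      using pos unfolding continuous_at_eps_delta by blast
    obtain r where r: "r > 0" "ball z0 r \<subseteq> V" using open_nbhd V open_contains_ball by blast
    have "z0 \<in> closure \<Omega>" using z0 by (simp add: frontier_def)
    then obtain y where y: "y \<in> \<Omega>" "dist y z0 < min d r"
      using d(1) r(1) unfolding closure_approachable by (metis min_less_iff_conj)
    have "y \<in> V" using y(2) r(2) by (auto simp: dist_commute)
    then have "\<rho> y < 0" using domain_iff y(1) by auto
    moreover have "dist (\<rho> y) (\<rho> z0) < \<rho> z0" using d(2) y(2) by auto
    ultimately show False by (simp add: dist_real_def)
  qed
qed

text \<open>Moving from \<open>z0 + t X\<close> along the transversal direction \<open>\<nu>\<close> by \<open>\<plusminus>\<epsilon> t\<close> changes the sign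
  of \<open>\<rho>\<close>, so the segment in between meets the boundary.\<close>

lemma frontier_near_tangent_ray:
  assumes z0: "z0 \<in> frontier \<Omega>" and \<nu>: "Dir \<rho> z0 \<nu> = 1" and X: "Dir \<rho> z0 X = 0"
    and \<epsilon>: "\<epsilon> > 0" and \<delta>: "\<delta> > 0"
  shows "\<exists>t s. 0 < t \<and> t < \<delta> \<and> \<bar>s\<bar> \<le> \<epsilon> * t \<and> z0 + (t *\<^sub>R X + s *\<^sub>R \<nu>) \<in> frontier \<Omega>"
proof -
  let ?l = "Dir \<rho> z0" and ?h = "\<lambda>t s. t *\<^sub>R X + s *\<^sub>R \<nu>"
  have V: "z0 \<in> V" using z0 frontier_subset by blast
  have dr: "(\<rho> has_derivative ?l) (at z0)"
    using differentiable_rho[OF z0] by (rule differentiable_imp_has_derivative_Dir)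
  have lin: "linear ?l" using has_derivative_bounded_linear[OF dr] bounded_linear.linear by blast
  define R where "R = norm X + \<epsilon> * norm \<nu> + 1"
  have R: "R \<ge> 1" using \<epsilon> by (simp add: R_def)
  have "\<epsilon> / (2 * R) > 0" using \<epsilon> R by simp
  then obtain d where d: "d > 0"
    "\<And>y. norm (y - z0) < d \<Longrightarrow> norm (\<rho> y - \<rho> z0 - ?l (y - z0)) \<le> \<epsilon> / (2 * R) * norm (y - z0)"
    using dr unfolding has_derivative_at_alt by blast
  obtain r where r: "r > 0" "ball z0 r \<subseteq> V" using open_nbhd V open_contains_ball by blast
  define m where "m = min (min d r) \<delta>"
  have m: "m > 0" "m \<le> d" "m \<le> r" "m \<le> \<delta>" using d r \<delta> by (auto simp: m_def)
  define t where "t = m / (2 * R)"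
  have "t * R = m / 2" "t \<le> m / 2" using R m(1) by (auto simp: t_def field_simps)
  then have t: "t > 0" "t < \<delta>" "t * R < d" "t * R < r" using m R by (auto simp: t_def)
  have near: "norm (?h t s) < min d r" and rho: "\<bar>\<rho> (z0 + ?h t s) - s\<bar> \<le> \<epsilon> * t / 2"
    if "\<bar>s\<bar> \<le> \<epsilon> * t" for s
  proof -
    have "norm (?h t s) \<le> t * (norm X + \<epsilon> * norm \<nu>)" using norm_scaleR_add_le[OF _ that] t(1) by simp
    also have "\<dots> \<le> t * R" using t(1) by (simp add: R_def)
    finally have nh: "norm (?h t s) \<le> t * R" .
    then show "norm (?h t s) < min d r" using t by simp
    have "?l (?h t s) = s" using linear_add[OF lin] linear_scale[OF lin] X \<nu> by simp
    then have "\<bar>\<rho> (z0 + ?h t s) - s\<bar> \<le> \<epsilon> / (2 * R) * norm (?h t s)"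
      using d(2)[of "z0 + ?h t s"] nh t rho_frontier_zero[OF z0] by simp
    also have "\<dots> \<le> \<epsilon> / (2 * R) * (t * R)" using nh \<epsilon> R by (intro mult_left_mono) auto
    finally show "\<bar>\<rho> (z0 + ?h t s) - s\<bar> \<le> \<epsilon> * t / 2" using R by simp
  qed
  have inV: "z0 + ?h t s \<in> V" if "\<bar>s\<bar> \<le> \<epsilon> * t" for s
    using near[OF that] r(2) by (auto simp: dist_norm norm_minus_commute subset_iff)
  have et: "\<epsilon> * t > 0" using \<epsilon> t by simp
  have "\<rho> (z0 + ?h t (- (\<epsilon> * t))) < 0" using rho[of "- (\<epsilon> * t)"] et unfolding abs_le_iff by linarith
  then have "z0 + ?h t (- (\<epsilon> * t)) \<in> \<Omega>" using domain_iff inV[of "- (\<epsilon> * t)"] et by auto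
  then have inside: "(z0 + t *\<^sub>R X) + (- (\<epsilon> * t)) *\<^sub>R \<nu> \<in> \<Omega>" by (simp only: add.assoc)
  have "\<rho> (z0 + ?h t (\<epsilon> * t)) > 0" using rho[of "\<epsilon> * t"] et unfolding abs_le_iff by linarith
  then have "z0 + ?h t (\<epsilon> * t) \<notin> \<Omega>" using domain_iff inV[of "\<epsilon> * t"] et by auto
  then have outside: "(z0 + t *\<^sub>R X) + (\<epsilon> * t) *\<^sub>R \<nu> \<notin> \<Omega>" by (simp add: add.assoc)
  have "- (\<epsilon> * t) \<le> \<epsilon> * t" using et by simp
  from line_meets_frontier[OF this inside outside]
  obtain s where "s \<in> {- (\<epsilon> * t)..\<epsilon> * t}" "(z0 + t *\<^sub>R X) + s *\<^sub>R \<nu> \<in> frontier \<Omega>" by blast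
  then show ?thesis using t(1,2) by (intro exI[of _ t] exI[of _ s]) (auto simp: add.assoc)
qed

lemma norm_derivative_le_of_near_value:
  assumes lin: "linear f'" and t: "0 < t" and s: "\<bar>s\<bar> \<le> \<epsilon> * t" and \<eta>: "\<eta> \<ge> 0"
    and approx: "norm (y - f' (t *\<^sub>R X + s *\<^sub>R \<nu>)) \<le> \<eta> * (t * R)" and small: "norm y \<le> \<eta> * (t * R)"
  shows "norm (f' X) \<le> 2 * \<eta> * R + \<epsilon> * norm (f' \<nu>)"
proof -
  have "t * norm (f' X) = norm (f' (t *\<^sub>R X + s *\<^sub>R \<nu>) - s *\<^sub>R f' \<nu>)"
    using t linear_add[OF lin] linear_scale[OF lin] by simp
  also have "\<dots> \<le> norm (f' (t *\<^sub>R X + s *\<^sub>R \<nu>)) + \<bar>s\<bar> * norm (f' \<nu>)"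
    using norm_triangle_ineq4[of "f' (t *\<^sub>R X + s *\<^sub>R \<nu>)" "s *\<^sub>R f' \<nu>"] by simp
  also have "\<dots> \<le> norm (y - f' (t *\<^sub>R X + s *\<^sub>R \<nu>)) + norm y + \<bar>s\<bar> * norm (f' \<nu>)"
    using norm_triangle_ineq4[of y "y - f' (t *\<^sub>R X + s *\<^sub>R \<nu>)"] by simp
  also have "\<dots> \<le> \<eta> * (t * R) + \<eta> * (t * R) + (\<epsilon> * t) * norm (f' \<nu>)"
    using approx small s by (intro add_mono mult_right_mono) auto
  also have "\<dots> = t * (2 * \<eta> * R + \<epsilon> * norm (f' \<nu>))" by (simp add: algebra_simps)
  finally show ?thesis using t by simp
qed

text \<open>A function that is \<open>o(|w - z0|)\<close> along the boundary has vanishing tangential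
  derivative at \<open>z0\<close>: otherwise it would grow linearly along the boundary points
  \<open>z0 + t X + s \<nu>\<close> with \<open>|s| \<le> \<epsilon> t\<close> found by \<open>frontier_near_tangent_ray\<close>.\<close>

lemma tangential_derivative_zero_if_small:
  fixes f :: "'a \<Rightarrow> 'b::real_normed_vector"
  assumes z0: "z0 \<in> frontier \<Omega>" and df: "(f has_derivative f') (at z0)" and X: "Dir \<rho> z0 X = 0"
    and small: "\<forall>\<epsilon>>0. \<exists>\<delta>>0. \<forall>w\<in>frontier \<Omega>. norm (w - z0) < \<delta> \<longrightarrow> norm (f w) \<le> \<epsilon> * norm (w - z0)"
  shows "f' X = 0"
proof (rule ccontr)
  assume "f' X \<noteq> 0"
  then have c: "norm (f' X) > 0" by simp
  obtain \<nu> where \<nu>: "Dir \<rho> z0 \<nu> = 1" using transversal[OF z0] by blast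
  have lin: "linear f'" using has_derivative_bounded_linear[OF df] bounded_linear.linear by blast
  define K where "K = norm (f' \<nu>) + 1"
  have K: "K > 0" by (simp add: K_def add_nonneg_pos)
  define \<epsilon> where "\<epsilon> = norm (f' X) / (4 * K)"
  have \<epsilon>: "\<epsilon> > 0" "\<epsilon> * norm (f' \<nu>) \<le> norm (f' X) / 4"
  proof -
    show "\<epsilon> > 0" using c K by (simp add: \<epsilon>_def)
    then have "\<epsilon> * norm (f' \<nu>) \<le> \<epsilon> * K" by (intro mult_left_mono) (auto simp: K_def)
    also have "\<dots> = norm (f' X) / 4" using K by (simp add: \<epsilon>_def)
    finally show "\<epsilon> * norm (f' \<nu>) \<le> norm (f' X) / 4" .
  qed
  define R where "R = norm X + \<epsilon> * norm \<nu>"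
  have R: "R \<ge> 0" using \<epsilon> by (simp add: R_def)
  define \<eta> where "\<eta> = norm (f' X) / (4 * (R + 1))"
  have \<eta>: "\<eta> > 0" "2 * \<eta> * R < norm (f' X) / 2" using c R by (auto simp: \<eta>_def field_simps)
  have f0: "f z0 = 0"
  proof -
    obtain \<delta> where "\<delta> > 0" "\<forall>w\<in>frontier \<Omega>. norm (w - z0) < \<delta> \<longrightarrow> norm (f w) \<le> 1 * norm (w - z0)"
      using small by (meson zero_less_one)
    then show ?thesis using z0 by auto
  qed
  obtain d1 where d1: "d1 > 0" "\<And>y. norm (y - z0) < d1 \<Longrightarrow> norm (f y - f z0 - f' (y - z0)) \<le> \<eta> * norm (y - z0)"
    using df \<eta> unfolding has_derivative_at_alt by blast
  obtain d2 where d2: "d2 > 0" "\<And>w. w \<in> frontier \<Omega> \<Longrightarrow> norm (w - z0) < d2 \<Longrightarrow> norm (f w) \<le> \<eta> * norm (w - z0)"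
    using small \<eta> by blast
  have "min d1 d2 / (R + 1) > 0" using d1 d2 R by simp
  then obtain t s where ts: "0 < t" "t < min d1 d2 / (R + 1)" "\<bar>s\<bar> \<le> \<epsilon> * t"
    and w: "z0 + (t *\<^sub>R X + s *\<^sub>R \<nu>) \<in> frontier \<Omega>"
    using frontier_near_tangent_ray[OF z0 \<nu> X \<epsilon>(1)] by blast
  define h where "h = t *\<^sub>R X + s *\<^sub>R \<nu>"
  have nh: "norm h \<le> t * R" using norm_scaleR_add_le[of t s] ts by (simp add: h_def R_def)
  moreover have "t * R < min d1 d2"
  proof -
    have "t * R \<le> t * (R + 1)" using ts by simp
    also have "\<dots> < min d1 d2" using ts R by (simp add: field_simps)
    finally show ?thesis .
  qed
  ultimately have h12: "norm h < d1" "norm h < d2" by linarith+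
  have "\<eta> * norm h \<le> \<eta> * (t * R)" using nh \<eta> by (intro mult_left_mono) auto
  moreover have "norm (f (z0 + h) - f' h) \<le> \<eta> * norm h" using d1(2)[of "z0 + h"] h12 f0 by simp
  moreover have "norm (f (z0 + h)) \<le> \<eta> * norm h" using d2(2)[of "z0 + h"] h12 w by (simp add: h_def)
  ultimately have "norm (f (z0 + h) - f' h) \<le> \<eta> * (t * R)" "norm (f (z0 + h)) \<le> \<eta> * (t * R)" by linarith+
  then have "norm (f' X) \<le> 2 * \<eta> * R + \<epsilon> * norm (f' \<nu>)"
    unfolding h_def using norm_derivative_le_of_near_value[OF lin ts(1,3)] \<eta>(1) by simp
  then show False using \<eta>(2) \<epsilon>(2) c by linarith
qed

lemma tangential_derivative_zero:
  fixes f :: "'a \<Rightarrow> 'b::real_normed_vector"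
  assumes z0: "z0 \<in> frontier \<Omega>" and df: "(f has_derivative f') (at z0)" and X: "Dir \<rho> z0 X = 0"
    and S: "open S" "z0 \<in> S" and vanish: "\<And>w. w \<in> S \<Longrightarrow> w \<in> frontier \<Omega> \<Longrightarrow> f w = 0"
  shows "f' X = 0"
proof (rule tangential_derivative_zero_if_small[OF z0 df X], intro allI impI)
  fix \<epsilon> :: real assume "\<epsilon> > 0"
  obtain r where r: "r > 0" "ball z0 r \<subseteq> S" using S open_contains_ball by blast
  have "f w = 0" if "w \<in> frontier \<Omega>" "norm (w - z0) < r" for w
    using r(2) that vanish by (auto simp: dist_norm norm_minus_commute subset_iff)
  then show "\<exists>\<delta>>0. \<forall>w\<in>frontier \<Omega>. norm (w - z0) < \<delta> \<longrightarrow> norm (f w) \<le> \<epsilon> * norm (w - z0)"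
    using r(1) \<open>\<epsilon> > 0\<close> by force
qed

lemma Dir_tangential_zero:
  fixes f :: "'a \<Rightarrow> 'b::real_normed_vector"
  assumes "z0 \<in> frontier \<Omega>" "f differentiable (at z0)" "Dir \<rho> z0 X = 0"
    "open S" "z0 \<in> S" "\<And>w. w \<in> S \<Longrightarrow> w \<in> frontier \<Omega> \<Longrightarrow> f w = 0"
  shows "Dir f z0 X = 0"
  by (rule tangential_derivative_zero[OF assms(1) differentiable_imp_has_derivative_Dir[OF assms(2)] assms(3-6)])

end

section \<open>The complex gradient and the Levi matrix of \<open>\<rho>\<close>\<close>

definition drho :: "(complex^'n::finite \<Rightarrow> real) \<Rightarrow> complex^'n \<Rightarrow> complex^'n" where
  "drho \<rho> z = (\<chi> j. dz j (cplx \<rho>) z)"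

definition levi_matrix :: "(complex^'n::finite \<Rightarrow> real) \<Rightarrow> complex^'n \<Rightarrow> complex^'n^'n" where
  "levi_matrix \<rho> z = (\<chi> j k. levi_coef \<rho> z j k)"

definition normal_part :: "(complex^'n::finite \<Rightarrow> real) \<Rightarrow> complex^'n \<Rightarrow> complex^'n \<Rightarrow> complex" where
  "normal_part \<rho> z a = (\<Sum>j\<in>UNIV. a$j * drho \<rho> z $ j)"

lemma levi_eq_sesq: "levi \<rho> z a b = sesq (levi_matrix \<rho> z) a b"
  by (simp add: levi_def sesq_def levi_matrix_def)

lemma T10_eq_normal_part: "T10 \<rho> z = {a. normal_part \<rho> z a = 0}"
  by (simp add: T10_def normal_part_def drho_def)

lemma mem_Tb_iff: "X \<in> Tb \<rho> z \<longleftrightarrow> Dir \<rho> z X = 0"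
  by (simp add: Tb_def)

lemma normal_part_add: "normal_part \<rho> z (x + y) = normal_part \<rho> z x + normal_part \<rho> z y"
  by (simp add: normal_part_def sum.distrib ring_distribs)
lemma normal_part_smult: "normal_part \<rho> z (c *s x) = c * normal_part \<rho> z x"
  by (simp add: normal_part_def sum_distrib_left mult.assoc)
lemma normal_part_diff: "normal_part \<rho> z (x - y) = normal_part \<rho> z x - normal_part \<rho> z y"
  by (simp add: normal_part_def sum_subtractf ring_distribs)

lemma T10_subspace: "vec.subspace (T10 \<rho> z)"
  unfolding vec.subspace_def T10_eq_normal_part
  by (simp add: normal_part_add normal_part_smult) (simp add: normal_part_def)

lemma has_derivative_normal_part:
  assumes "(D has_derivative D') (at p)" "(drho \<rho> has_derivative R') (at p)"
  shows "((\<lambda>z. normal_part \<rho> z (D z)) has_derivative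
           (\<lambda>h. normal_part \<rho> p (D' h) + (\<Sum>j\<in>UNIV. D p $ j * R' h $ j))) (at p)"
proof -
  have "((\<lambda>z. \<Sum>j\<in>UNIV. D z $ j * drho \<rho> z $ j) has_derivative
        (\<lambda>h. \<Sum>j\<in>UNIV. D p $ j * R' h $ j + D' h $ j * drho \<rho> p $ j)) (at p)"
    by (intro has_derivative_sum has_derivative_mult has_derivative_vec_nth assms)
  then show ?thesis by (simp add: normal_part_def sum.distrib add.commute)
qed

lemma Dir_cplx:
  assumes "\<rho> differentiable (at z)"
  shows "Dir (cplx \<rho>) z v = complex_of_real (Dir \<rho> z v)"
proof -
  have "(cplx \<rho> has_derivative (\<lambda>h. complex_of_real (Dir \<rho> z h))) (at z)"
    unfolding cplx_def using differentiable_imp_has_derivative_Dir[OF assms]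
    by (rule bounded_linear.has_derivative[OF bounded_linear_of_real])
  then show ?thesis by (simp add: has_derivative_imp_Dir_eq)
qed

text \<open>The Wirtinger derivatives of \<open>\<rho>\<close> written with the real derivative of \<open>\<rho>\<close>; unlike
  \<^term>\<open>dz j (cplx \<rho>)\<close> they are visibly \<open>C\<^sup>k\<close> when \<open>\<rho>\<close> is \<open>C\<^sup>k\<^sup>+\<^sup>1\<close>.\<close>

definition dz_real :: "(complex^'n::finite \<Rightarrow> real) \<Rightarrow> 'n \<Rightarrow> complex^'n \<Rightarrow> complex" where
  "dz_real \<rho> j z = (complex_of_real (Dir \<rho> z (axis j 1)) - \<i> * complex_of_real (Dir \<rho> z (axis j \<i>))) / 2"

definition dzbar_real :: "(complex^'n::finite \<Rightarrow> real) \<Rightarrow> 'n \<Rightarrow> complex^'n \<Rightarrow> complex" where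
  "dzbar_real \<rho> j z = (complex_of_real (Dir \<rho> z (axis j 1)) + \<i> * complex_of_real (Dir \<rho> z (axis j \<i>))) / 2"

lemma dz_cplx_eq: "\<rho> differentiable (at z) \<Longrightarrow> dz j (cplx \<rho>) z = dz_real \<rho> j z"
  by (simp add: dz_def dz_real_def Dir_cplx)

lemma dzbar_cplx_eq: "\<rho> differentiable (at z) \<Longrightarrow> dzbar j (cplx \<rho>) z = dzbar_real \<rho> j z"
  by (simp add: dzbar_def dzbar_real_def Dir_cplx)

lemma dzbar_real_eq_cnj: "dzbar_real \<rho> j z = cnj (dz_real \<rho> j z)"
  by (simp add: dzbar_real_def dz_real_def complex_cnj_diff complex_cnj_add complex_cnj_mult)

lemma Ck_dz_real:
  assumes "open V" "Ck (Suc k) V \<rho>"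
  shows "Ck k V (dz_real \<rho> j)" "Ck k V (dzbar_real \<rho> j)"
proof -
  have a: "Ck k V (\<lambda>z. complex_of_real (Dir \<rho> z v))" for v
    using Ck_of_real[OF assms(1) Ck_Suc_Dir[OF assms(2)]] .
  have "Ck k V (\<lambda>z. (1/2) * (complex_of_real (Dir \<rho> z (axis j 1)) + (- \<i>) * complex_of_real (Dir \<rho> z (axis j \<i>))))"
    by (intro Ck_const_mult[OF assms(1)] Ck_add[OF assms(1)] a)
  then show "Ck k V (dz_real \<rho> j)" by (simp add: dz_real_def[abs_def] field_simps)
  have "Ck k V (\<lambda>z. (1/2) * (complex_of_real (Dir \<rho> z (axis j 1)) + \<i> * complex_of_real (Dir \<rho> z (axis j \<i>))))"
    by (intro Ck_const_mult[OF assms(1)] Ck_add[OF assms(1)] a)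
  then show "Ck k V (dzbar_real \<rho> j)" by (simp add: dzbar_real_def[abs_def] field_simps)
qed

lemma Ck_drho:
  assumes "open V" "Ck (Suc k) V \<rho>"
  shows "Ck k V (drho \<rho>)"
proof -
  have "Ck k V (\<lambda>z. \<chi> j. dz_real \<rho> j z)"
    by (rule Ck_vec[OF assms(1)]) (rule Ck_dz_real[OF assms])
  moreover have "drho \<rho> z = (\<chi> j. dz_real \<rho> j z)" if "z \<in> V" for z
    using assms(2) that by (simp add: drho_def dz_cplx_eq vec_eq_iff)
  ultimately show ?thesis using Ck_cong[OF assms(1), of "drho \<rho>"] by simp
qed

lemma Ck_levi_matrix:
  assumes "open V" "Ck (Suc (Suc k)) V \<rho>"
  shows "Ck k V (levi_matrix \<rho>)"
proof -
  have dzbar_real: "Ck (Suc k) V (dzbar_real \<rho> j)" for j using Ck_dz_real(2)[OF assms] .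
  have eqd: "Dir (\<lambda>z. dzbar k' (cplx \<rho>) z) z = Dir (dzbar_real \<rho> k') z" if "z \<in> V" for z k'
    by (rule Dir_transform_within_open[OF assms(1) that]) (use assms(2) dzbar_cplx_eq in auto)
  define G where "G j k' z = (Dir (dzbar_real \<rho> k') z (axis j 1) - \<i> * Dir (dzbar_real \<rho> k') z (axis j \<i>)) / 2" for j k' z
  have "Ck k V (\<lambda>z. (1/2) * (Dir (dzbar_real \<rho> k') z (axis j 1) + (- \<i>) * Dir (dzbar_real \<rho> k') z (axis j \<i>)))" for j k'
    by (intro Ck_const_mult[OF assms(1)] Ck_add[OF assms(1)] Ck_Suc_Dir[OF dzbar_real])
  then have "Ck k V (G j k')" for j k' by (simp add: G_def[abs_def] field_simps)
  then have "Ck k V (\<lambda>z. \<chi> j. \<chi> k'. G j k' z)"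
    by (intro Ck_vec[OF assms(1)])
  moreover have "levi_matrix \<rho> z = (\<chi> j. \<chi> k'. G j k' z)" if "z \<in> V" for z
    using eqd[OF that] by (simp add: levi_matrix_def levi_coef_def dz_def G_def vec_eq_iff)
  ultimately show ?thesis using Ck_cong[OF assms(1), of "levi_matrix \<rho>"] by simp
qed

lemma dnorm_one_imp_drho_nonzero:
  assumes "\<rho> differentiable (at z)" "dnorm \<rho> z = 1"
  shows "drho \<rho> z \<noteq> 0"
proof
  assume "drho \<rho> z = 0"
  then have "dz j (cplx \<rho>) z = 0" for j by (simp add: drho_def vec_eq_iff)
  moreover have "dzbar j (cplx \<rho>) z = cnj (dz j (cplx \<rho>) z)" for j
    using assms(1) by (simp add: dz_cplx_eq dzbar_cplx_eq dzbar_real_eq_cnj)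
  ultimately have "dnorm \<rho> z = 0" by (simp add: dnorm_def)
  then show False using assms(2) by simp
qed

lemma dnorm_one_imp_transversal:
  assumes "\<rho> differentiable (at z)" "dnorm \<rho> z = 1"
  shows "\<exists>\<nu>. Dir \<rho> z \<nu> = 1"
proof -
  obtain j where "drho \<rho> z $ j \<noteq> 0"
    using dnorm_one_imp_drho_nonzero[OF assms] by (auto simp: vec_eq_iff)
  then have "dz_real \<rho> j z \<noteq> 0" using assms(1) by (simp add: drho_def dz_cplx_eq)
  then obtain v where v: "Dir \<rho> z v \<noteq> 0" by (auto simp: dz_real_def)
  have "linear (Dir \<rho> z)"
    using assms(1) linear_frechet_derivative by (simp add: Dir_eq_frechet_derivative)
  then have "Dir \<rho> z ((1 / Dir \<rho> z v) *\<^sub>R v) = 1" using v by (simp add: linear_scale)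
  then show ?thesis by blast
qed

section \<open>The Hermitian product and orthonormal families\<close>

lemma herm_eq_sesq_mat1: "herm a b = sesq (mat 1) a b"
proof -
  have "(\<Sum>k\<in>UNIV. mat 1 $ j $ k * a$j * cnj (b$k)) = a$j * cnj (b$j)" for j
  proof -
    have "(\<Sum>k\<in>UNIV. mat 1 $ j $ k * a$j * cnj (b$k)) = (\<Sum>k\<in>UNIV. if j = k then a$j * cnj (b$k) else 0)"
      by (rule sum.cong) (auto simp: mat_def)
    then show ?thesis by simp
  qed
  then show ?thesis by (simp add: herm_def sesq_def)
qed

lemma cspan_eq_span: "cspan S = vec.span S"
  by (auto simp: cspan_def vec.span_explicit)

lemma mult_cnj_eq_cmod_sq: "z * cnj z = (complex_of_real (cmod z))^2"
  using complex_norm_square[of z] by simp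

lemma herm_self_eq_norm_sq: "herm a a = complex_of_real ((norm a)^2)"
proof -
  have "herm a a = (\<Sum>j\<in>UNIV. complex_of_real ((cmod (a$j))^2))"
    by (simp add: herm_def mult_cnj_eq_cmod_sq)
  also have "\<dots> = complex_of_real (\<Sum>j\<in>UNIV. (cmod (a$j))^2)" by simp
  also have "(\<Sum>j\<in>UNIV. (cmod (a$j))^2) = (norm a)^2"
    by (simp add: norm_vec_def L2_set_def sum_nonneg)
  finally show ?thesis .
qed

lemma norm_herm_le: "cmod (herm a b) \<le> norm a * norm b"
proof -
  have "cmod (herm a b) \<le> (\<Sum>j\<in>UNIV. cmod (a$j) * cmod (b$j))"
    unfolding herm_def by (rule order_trans[OF norm_sum]) (simp add: norm_mult)
  also have "\<dots> \<le> L2_set (\<lambda>j. cmod (a$j)) UNIV * L2_set (\<lambda>j. cmod (b$j)) UNIV"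
    using L2_set_mult_ineq[of "\<lambda>j. cmod (a$j)" "\<lambda>j. cmod (b$j)" UNIV] by simp
  finally show ?thesis by (simp add: norm_vec_def)
qed

definition orthonormal_family :: "nat \<Rightarrow> (nat \<Rightarrow> complex^'n::finite) \<Rightarrow> bool" where
  "orthonormal_family M e \<longleftrightarrow> (\<forall>i<M. \<forall>k<M. herm (e i) (e k) = (if i = k then 1 else 0))"

lemma orthonormal_family_inj: "orthonormal_family M e \<Longrightarrow> inj_on e {..<M}"
proof (rule inj_onI)
  fix i k assume o: "orthonormal_family M e" and ik: "i \<in> {..<M}" "k \<in> {..<M}" "e i = e k"
  show "i = k"
  proof (rule ccontr)
    assume "i \<noteq> k"
    then have "herm (e i) (e k) = 0" using o ik(1,2) by (simp add: orthonormal_family_def)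
    moreover have "herm (e i) (e i) = 1" using o ik(1,2) by (simp add: orthonormal_family_def)
    moreover have "herm (e i) (e k) = herm (e i) (e i)" using ik(3) by simp
    ultimately show False by simp
  qed
qed

lemma orthonormal_family_norm: "orthonormal_family M e \<Longrightarrow> i < M \<Longrightarrow> norm (e i) = 1"
proof -
  assume o: "orthonormal_family M e" "i < M"
  then have "herm (e i) (e i) = 1" by (simp add: orthonormal_family_def)
  then have "complex_of_real ((norm (e i))^2) = 1" using herm_self_eq_norm_sq by metis
  then have "(norm (e i))^2 = 1" using of_real_eq_1_iff by blast
  then show ?thesis using norm_ge_zero[of "e i"] by (simp add: power2_eq_1_iff)
qed

lemma orthonormal_family_independent:
  assumes o: "orthonormal_family M e" and I: "I \<subseteq> {..<M}"
  shows "vec.independent (e ` I)"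
proof -
  have fI: "finite I" using I finite_subset by blast
  have inj: "inj_on e I" using orthonormal_family_inj[OF o] I inj_on_subset by blast
  show ?thesis unfolding vec.independent_explicit
  proof (intro conjI allI impI ballI)
    show "finite (e ` I)" using fI by simp
  next
    fix c v assume s: "(\<Sum>v\<in>e ` I. c v *s v) = 0" and v: "v \<in> e ` I"
    then obtain k where k: "k \<in> I" "v = e k" by blast
    have s2: "(\<Sum>i\<in>I. c (e i) *s e i) = 0" using s by (simp add: sum.reindex[OF inj])
    have "herm (\<Sum>i\<in>I. c (e i) *s e i) (e k) = (\<Sum>i\<in>I. c (e i) * herm (e i) (e k))"
      unfolding herm_eq_sesq_mat1 by (simp add: sesq_sum_left[OF fI] sesq_scale_left)
    also have "\<dots> = (\<Sum>i\<in>I. if i = k then c (e i) else 0)"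
      using o I k(1) by (intro sum.cong refl) (auto simp: orthonormal_family_def subset_iff)
    also have "\<dots> = c (e k)" using fI k(1) by simp
    finally show "c v = 0" using s2 k(2) by (simp add: herm_def)
  qed
qed

lemma orthonormal_span_expand:
  assumes o: "orthonormal_family M e" and I: "I \<subseteq> {..<M}" and v: "v \<in> vec.span (e ` I)"
  shows "v = (\<Sum>i\<in>I. herm v (e i) *s e i)"
    and "\<And>k. k < M \<Longrightarrow> k \<notin> I \<Longrightarrow> herm v (e k) = 0"
proof -
  have fI: "finite I" using I finite_subset by blast
  have inj: "inj_on e I" using orthonormal_family_inj[OF o] I inj_on_subset by blast
  obtain u where u: "v = (\<Sum>x\<in>e ` I. u x *s x)"
    using v vec.span_finite[of "e ` I"] fI by auto
  have v2: "v = (\<Sum>i\<in>I. u (e i) *s e i)" using u sum.reindex[OF inj] by (simp add: comp_def)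
  have hk: "herm v (e k) = (\<Sum>i\<in>I. u (e i) * herm (e i) (e k))" for k
    unfolding v2 herm_eq_sesq_mat1 by (simp add: sesq_sum_left[OF fI] sesq_scale_left)
  have c: "herm v (e k) = u (e k)" if "k \<in> I" for k
  proof -
    have "herm v (e k) = (\<Sum>i\<in>I. if i = k then u (e i) else 0)"
      unfolding hk using o I that by (intro sum.cong) (auto simp: orthonormal_family_def herm_eq_sesq_mat1[symmetric] subset_iff)
    also have "\<dots> = u (e k)" using fI that by simp
    finally show ?thesis .
  qed
  show "v = (\<Sum>i\<in>I. herm v (e i) *s e i)" using v2 c by simp
  show "\<And>k. k < M \<Longrightarrow> k \<notin> I \<Longrightarrow> herm v (e k) = 0"
  proof -
    fix k assume "k < M" "k \<notin> I"
    then show "herm v (e k) = 0"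
      unfolding hk using o I by (intro sum.neutral) (auto simp: orthonormal_family_def herm_eq_sesq_mat1[symmetric] subset_iff)
  qed
qed

lemma orthonormal_span_parseval:
  assumes o: "orthonormal_family M e" and I: "I \<subseteq> {..<M}" and v: "v \<in> vec.span (e ` I)"
  shows "(norm v)^2 = (\<Sum>i\<in>I. (cmod (herm v (e i)))^2)"
proof -
  have fI: "finite I" using I finite_subset by blast
  have "herm v v = herm v (\<Sum>i\<in>I. herm v (e i) *s e i)" using orthonormal_span_expand(1)[OF assms] by simp
  also have "\<dots> = (\<Sum>i\<in>I. cnj (herm v (e i)) * herm v (e i))"
    by (simp add: herm_eq_sesq_mat1 sesq_sum_right[OF fI] sesq_scale_right)
  also have "\<dots> = (\<Sum>i\<in>I. complex_of_real ((cmod (herm v (e i)))^2))"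
    by (simp add: mult_cnj_eq_cmod_sq mult.commute)
  finally have h: "herm v v = (\<Sum>i\<in>I. complex_of_real ((cmod (herm v (e i)))^2))" .
  have "complex_of_real ((norm v)^2) = complex_of_real (\<Sum>i\<in>I. (cmod (herm v (e i)))^2)"
    unfolding of_real_sum using h herm_self_eq_norm_sq[of v] by simp
  then show ?thesis using of_real_eq_iff by blast
qed

lemma sesq_orthonormal_expand:
  assumes o: "orthonormal_family M e" and I: "I \<subseteq> {..<M}" and J: "J \<subseteq> {..<M}"
    and a: "a \<in> vec.span (e ` I)" and b: "b \<in> vec.span (e ` J)"
  shows "sesq C a b = (\<Sum>i\<in>I. \<Sum>k\<in>J. herm a (e i) * cnj (herm b (e k)) * sesq C (e i) (e k))"
proof -
  have fI: "finite I" "finite J" using I J finite_subset by blast+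
  have "sesq C a b = sesq C (\<Sum>i\<in>I. herm a (e i) *s e i) (\<Sum>k\<in>J. herm b (e k) *s e k)"
    using orthonormal_span_expand(1)[OF o I a] orthonormal_span_expand(1)[OF o J b] by simp
  also have "\<dots> = (\<Sum>i\<in>I. \<Sum>k\<in>J. herm a (e i) * cnj (herm b (e k)) * sesq C (e i) (e k))"
    by (simp add: sesq_sum_left[OF fI(1)] sesq_sum_right[OF fI(2)] sesq_scale_left sesq_scale_right sum_distrib_left mult_ac)
       (subst sum.swap, simp)
  finally show ?thesis .
qed

section \<open>Eigenbases of the Levi form\<close>

definition levi_eigenbasis :: "(complex^'n::finite \<Rightarrow> real) \<Rightarrow> complex^'n \<Rightarrow> (nat \<Rightarrow> real) \<Rightarrow> (nat \<Rightarrow> complex^'n) \<Rightarrow> bool" where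
  "levi_eigenbasis \<rho> z mu e \<longleftrightarrow> (\<forall>i < CARD('n) - 1. e i \<in> T10 \<rho> z) \<and>
        T10 \<rho> z \<subseteq> cspan (e ` {..<CARD('n) - 1}) \<and> orthonormal_family (CARD('n) - 1) e \<and>
        (\<forall>i < CARD('n) - 1. \<forall>k < CARD('n) - 1.
            levi \<rho> z (e i) (e k) = (if i = k then complex_of_real (mu i) else 0))"

lemma levi_eigenvalues_imp_eigenbasis:
  "levi_eigenvalues \<rho> z mu \<Longrightarrow> \<exists>e. levi_eigenbasis \<rho> z mu e"
  unfolding levi_eigenvalues_def levi_eigenbasis_def orthonormal_family_def by (elim conjE exE) (intro exI conjI, assumption+)

lemma levi_eigenvalues_sorted:
  fixes \<rho> :: "complex^'n::finite \<Rightarrow> real"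
  shows "levi_eigenvalues \<rho> z mu \<Longrightarrow> i \<le> j \<Longrightarrow> j < CARD('n::finite) - 1 \<Longrightarrow> mu i \<le> mu j"
  unfolding levi_eigenvalues_def by blast

lemma T10_eq_span_eigenbasis:
  fixes \<rho> :: "complex^'n::finite \<Rightarrow> real"
  assumes "levi_eigenbasis \<rho> z mu e"
  shows "T10 \<rho> z = vec.span (e ` {..<CARD('n::finite) - 1})"
proof
  show "T10 \<rho> z \<subseteq> vec.span (e ` {..<CARD('n) - 1})" using assms by (simp add: levi_eigenbasis_def cspan_eq_span)
  show "vec.span (e ` {..<CARD('n) - 1}) \<subseteq> T10 \<rho> z"
    using assms T10_subspace vec.span_minimal[of "e ` {..<CARD('n) - 1}" "T10 \<rho> z"]
    by (auto simp: levi_eigenbasis_def)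
qed

lemma span_eigenbasis_subset_T10:
  fixes \<rho> :: "complex^'n::finite \<Rightarrow> real"
  assumes "levi_eigenbasis \<rho> z mu e" "I \<subseteq> {..<CARD('n::finite) - 1}"
  shows "vec.span (e ` I) \<subseteq> T10 \<rho> z"
  using T10_eq_span_eigenbasis[OF assms(1)] vec.span_mono[of "e ` I" "e ` {..<CARD('n) - 1}"] assms(2) by auto

lemma levi_eigenbasis_expand:
  fixes \<rho> :: "complex^'n::finite \<Rightarrow> real"
  assumes eb: "levi_eigenbasis \<rho> z mu e" and a: "a \<in> T10 \<rho> z" and b: "b \<in> T10 \<rho> z"
  shows "levi \<rho> z a b = (\<Sum>i<CARD('n::finite) - 1. herm a (e i) * cnj (herm b (e i)) * complex_of_real (mu i))"
proof -
  let ?M = "CARD('n) - 1"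
  have o: "orthonormal_family ?M e" using eb by (simp add: levi_eigenbasis_def)
  have sp: "a \<in> vec.span (e ` {..<?M})" "b \<in> vec.span (e ` {..<?M})" using T10_eq_span_eigenbasis[OF eb] a b by auto
  have "levi \<rho> z a b = (\<Sum>i<?M. \<Sum>k<?M. herm a (e i) * cnj (herm b (e k)) * sesq (levi_matrix \<rho> z) (e i) (e k))"
    unfolding levi_eq_sesq by (rule sesq_orthonormal_expand[OF o _ _ sp]) auto
  also have "\<dots> = (\<Sum>i<?M. \<Sum>k<?M. if k = i then herm a (e i) * cnj (herm b (e i)) * complex_of_real (mu i) else 0)"
    using eb by (intro sum.cong refl) (auto simp: levi_eigenbasis_def levi_eq_sesq[symmetric])
  also have "\<dots> = (\<Sum>i<?M. herm a (e i) * cnj (herm b (e i)) * complex_of_real (mu i))"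
    by simp
  finally show ?thesis .
qed

lemma levi_hermitian:
  assumes "levi_eigenvalues \<rho> z mu" "a \<in> T10 \<rho> z" "b \<in> T10 \<rho> z"
  shows "levi \<rho> z a b = cnj (levi \<rho> z b a)"
proof -
  obtain e where eb: "levi_eigenbasis \<rho> z mu e" using levi_eigenvalues_imp_eigenbasis[OF assms(1)] by blast
  show ?thesis unfolding levi_eigenbasis_expand[OF eb assms(2,3)] levi_eigenbasis_expand[OF eb assms(3,2)]
    by (simp add: mult_ac)
qed

lemma levi_diff_eq:
  assumes "levi_eigenvalues \<rho> z mu" "b \<in> T10 \<rho> z" "a' - b' \<in> T10 \<rho> z"
  shows "levi \<rho> z a a' - levi \<rho> z b b' = levi \<rho> z (a - b) a' + cnj (levi \<rho> z (a' - b') b)"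
proof -
  have "levi \<rho> z a a' - levi \<rho> z b b' = levi \<rho> z (a - b) a' + levi \<rho> z b (a' - b')"
    by (simp add: levi_eq_sesq sesq_diff_left sesq_diff_right)
  then show ?thesis using levi_hermitian[OF assms] by simp
qed

lemma levi_eigvec_coeff_imp_eigenvalue:
  fixes \<rho> :: "complex^'n::finite \<Rightarrow> real"
  assumes eb: "levi_eigenbasis \<rho> z mu e" and ev: "levi_eigvec \<rho> z lam a" and l: "l < CARD('n::finite) - 1"
    and nz: "herm a (e l) \<noteq> 0"
  shows "mu l = lam"
proof -
  let ?M = "CARD('n) - 1"
  have o: "orthonormal_family ?M e" using eb by (simp add: levi_eigenbasis_def)
  have a: "a \<in> T10 \<rho> z" using ev by (simp add: levi_eigvec_def)
  have el: "e l \<in> T10 \<rho> z" using eb l by (simp add: levi_eigenbasis_def)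
  have "levi \<rho> z a (e l) = complex_of_real lam * herm a (e l)"
    using ev el by (simp add: levi_eigvec_def)
  moreover have "levi \<rho> z a (e l) = herm a (e l) * complex_of_real (mu l)"
  proof -
    have "levi \<rho> z a (e l) = (\<Sum>i<?M. herm a (e i) * cnj (herm (e l) (e i)) * complex_of_real (mu i))"
      by (rule levi_eigenbasis_expand[OF eb a el])
    also have "\<dots> = (\<Sum>i<?M. if i = l then herm a (e i) * complex_of_real (mu i) else 0)"
      using o l by (intro sum.cong refl) (auto simp: orthonormal_family_def)
    also have "\<dots> = herm a (e l) * complex_of_real (mu l)" using l by simp
    finally show ?thesis .
  qed
  ultimately have "herm a (e l) * (complex_of_real (mu l) - complex_of_real lam) = 0"
    by (simp add: algebra_simps)
  then show ?thesis using nz by simp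
qed

text \<open>Eigenvectors at \<open>z\<close> for those eigenvalues \<open>mu j\<close> whose counterpart \<open>mu0 j\<close> vanishes; with
  \<open>mu = \<mu> z\<close> and \<open>mu0 = \<mu> p\<close> their span is the fibre of \<open>\<tilde>K\<^sup>1\<^sup>,\<^sup>0\<^sub>p\<close> at \<open>z\<close>.\<close>

definition near_kernel_eigvecs :: "(complex^'n::finite \<Rightarrow> real) \<Rightarrow> complex^'n \<Rightarrow> (nat \<Rightarrow> real) \<Rightarrow> (nat \<Rightarrow> real) \<Rightarrow> (complex^'n) set" where
  "near_kernel_eigvecs \<rho> z mu0 mu = {a. \<exists>j < CARD('n) - 1. mu0 j = 0 \<and> levi_eigvec \<rho> z (mu j) a}"

lemma near_kernel_span_subset:
  fixes \<rho> :: "complex^'n::finite \<Rightarrow> real"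
  assumes eb: "levi_eigenbasis \<rho> z mu e"
    and gap: "\<forall>j < CARD('n::finite) - 1. \<forall>k < CARD('n) - 1. mp k \<noteq> 0 \<longrightarrow> mp j = 0 \<longrightarrow> mu k \<noteq> mu j"
  shows "cspan (near_kernel_eigvecs \<rho> z mp mu) \<subseteq> vec.span (e ` {k. k < CARD('n) - 1 \<and> mp k = 0})"
proof -
  let ?M = "CARD('n) - 1"
  let ?J = "{k. k < ?M \<and> mp k = 0}"
  have o: "orthonormal_family ?M e" using eb by (simp add: levi_eigenbasis_def)
  have "a \<in> vec.span (e ` ?J)" if h: "\<exists>j < ?M. mp j = 0 \<and> levi_eigvec \<rho> z (mu j) a" for a
  proof -
    obtain j where j: "j < ?M" "mp j = 0" "levi_eigvec \<rho> z (mu j) a" using h by blast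
    have aT: "a \<in> T10 \<rho> z" using j(3) by (simp add: levi_eigvec_def)
    have sp: "a \<in> vec.span (e ` {..<?M})" using T10_eq_span_eigenbasis[OF eb] aT by auto
    have ex: "a = (\<Sum>i\<in>{..<?M}. herm a (e i) *s e i)" using orthonormal_span_expand(1)[OF o _ sp] by simp
    have z: "herm a (e i) = 0" if "i < ?M" "i \<notin> ?J" for i
    proof (rule ccontr)
      assume "herm a (e i) \<noteq> 0"
      then have "mu i = mu j" using levi_eigvec_coeff_imp_eigenvalue[OF eb j(3) that(1)] by simp
      moreover have "mp i \<noteq> 0" using that by simp
      ultimately show False using gap j(1,2) that(1) by blast
    qed
    have "a = (\<Sum>i\<in>?J. herm a (e i) *s e i)"
    proof -
      have "(\<Sum>i\<in>{..<?M}. herm a (e i) *s e i) = (\<Sum>i\<in>?J. herm a (e i) *s e i)"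
        by (rule sum.mono_neutral_right) (auto simp: z)
      then show ?thesis using ex by simp
    qed
    moreover have "(\<Sum>i\<in>?J. herm a (e i) *s e i) \<in> vec.span (e ` ?J)"
      by (intro vec.span_sum vec.span_scale vec.span_base) auto
    ultimately show ?thesis by simp
  qed
  then have "near_kernel_eigvecs \<rho> z mp mu \<subseteq> vec.span (e ` ?J)" by (auto simp: near_kernel_eigvecs_def)
  then show ?thesis unfolding cspan_eq_span by (rule vec.span_minimal[OF _ vec.subspace_span])
qed

lemma norm_levi_le_eigenvalue_sum:
  fixes \<rho> :: "complex^'n::finite \<Rightarrow> real"
  assumes eb: "levi_eigenbasis \<rho> z mu e" and J: "J \<subseteq> {..<CARD('n::finite) - 1}"
    and D: "D \<in> vec.span (e ` J)" and B: "B \<in> T10 \<rho> z"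
  shows "cmod (levi \<rho> z D B) \<le> (\<Sum>k\<in>J. \<bar>mu k\<bar>) * norm D * norm B"
proof -
  let ?M = "CARD('n) - 1"
  have o: "orthonormal_family ?M e" using eb by (simp add: levi_eigenbasis_def)
  have DT: "D \<in> T10 \<rho> z" using span_eigenbasis_subset_T10[OF eb J] D by auto
  have z: "herm D (e i) = 0" if "i < ?M" "i \<notin> J" for i using orthonormal_span_expand(2)[OF o J D] that by blast
  have "levi \<rho> z D B = (\<Sum>i<?M. herm D (e i) * cnj (herm B (e i)) * complex_of_real (mu i))"
    by (rule levi_eigenbasis_expand[OF eb DT B])
  also have "\<dots> = (\<Sum>i\<in>J. herm D (e i) * cnj (herm B (e i)) * complex_of_real (mu i))"
    by (rule sum.mono_neutral_right) (use J z in auto)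
  finally have eq: "levi \<rho> z D B = (\<Sum>i\<in>J. herm D (e i) * cnj (herm B (e i)) * complex_of_real (mu i))" .
  have "cmod (levi \<rho> z D B) \<le> (\<Sum>i\<in>J. cmod (herm D (e i) * cnj (herm B (e i)) * complex_of_real (mu i)))"
    unfolding eq by (rule norm_sum)
  also have "\<dots> \<le> (\<Sum>i\<in>J. \<bar>mu i\<bar> * norm D * norm B)"
  proof (rule sum_mono)
    fix i assume i: "i \<in> J"
    then have ne: "norm (e i) = 1" using orthonormal_family_norm[OF o] J by auto
    have "cmod (herm D (e i)) \<le> norm D" using norm_herm_le[of D "e i"] ne by simp
    moreover have "cmod (herm B (e i)) \<le> norm B" using norm_herm_le[of B "e i"] ne by simp
    ultimately have "cmod (herm D (e i)) * cmod (herm B (e i)) \<le> norm D * norm B"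
      by (intro mult_mono) auto
    then have "\<bar>mu i\<bar> * (cmod (herm D (e i)) * cmod (herm B (e i))) \<le> \<bar>mu i\<bar> * (norm D * norm B)"
      by (intro mult_left_mono) auto
    then show "cmod (herm D (e i) * cnj (herm B (e i)) * complex_of_real (mu i)) \<le> \<bar>mu i\<bar> * norm D * norm B"
      by (simp add: norm_mult mult_ac)
  qed
  also have "\<dots> = (\<Sum>k\<in>J. \<bar>mu k\<bar>) * norm D * norm B" by (simp add: sum_distrib_right)
  finally show ?thesis .
qed



lemma cspan_near_kernel_eigvecs_subset_T10: "cspan (near_kernel_eigvecs \<rho> z mu0 mu) \<subseteq> T10 \<rho> z"
  unfolding cspan_eq_span
  by (rule vec.span_minimal[OF _ T10_subspace]) (auto simp: near_kernel_eigvecs_def levi_eigvec_def)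

lemma levi_matrix_T10_Kker_zero:
  assumes ev: "levi_eigenvalues \<rho> p mu" and b: "b \<in> Kker \<rho> p" and v: "normal_part \<rho> p v = 0"
  shows "sesq (levi_matrix \<rho> p) v b = 0"
proof -
  have vT: "v \<in> T10 \<rho> p" using v by (simp add: T10_eq_normal_part)
  have bT: "b \<in> T10 \<rho> p" and bK: "levi \<rho> p b v = 0" using b vT by (auto simp: Kker_def)
  have "levi \<rho> p v b = cnj (levi \<rho> p b v)" using levi_hermitian[OF ev vT bT] .
  then show ?thesis using bK by (simp add: levi_eq_sesq)
qed

lemma KX_subset_Kker: "KX \<Omega> \<rho> p X \<subseteq> Kker \<rho> p"
  by (auto simp: KX_def)

lemma KX_derivative_zero:
  assumes "a \<in> KX \<Omega> \<rho> p X" "b \<in> Kker \<rho> p" "open W" "p \<in> W" "Ck 1 W La" "Ck 1 W Lb"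
    "La p = a" "Lb p = b" "\<forall>z\<in>W \<inter> frontier \<Omega>. La z \<in> T10 \<rho> z \<and> Lb z \<in> T10 \<rho> z"
  shows "Dir (\<lambda>z. levi \<rho> z (La z) (Lb z)) p X = 0"
  using assms unfolding KX_def by blast

section \<open>Moving \<open>T\<^sup>1\<^sup>,\<^sup>0\<close> from \<open>p\<close> to nearby points\<close>

lemma norm_vector_smult: "norm (c *s (x::complex^'n::finite)) = cmod c * norm x"
  by (simp add: norm_vec_def L2_set_right_distrib norm_mult)

definition drho_sq :: "(complex^'n::finite \<Rightarrow> real) \<Rightarrow> complex^'n \<Rightarrow> complex" where
  "drho_sq \<rho> z = herm (drho \<rho> z) (drho \<rho> z)"

definition normal_vec :: "(complex^'n::finite \<Rightarrow> real) \<Rightarrow> complex^'n \<Rightarrow> complex^'n" where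
  "normal_vec \<rho> z = (\<chi> j. cnj (drho \<rho> z $ j))"

text \<open>\<^term>\<open>proj_T10 \<rho> p z\<close> maps \<open>\<complex>\<^sup>n\<close> into \<open>T\<^sup>1\<^sup>,\<^sup>0\<^sub>z\<close>, depends smoothly on \<open>z\<close> and is the
  identity on \<open>T\<^sup>1\<^sup>,\<^sup>0\<^sub>p\<close> for \<open>z = p\<close>.\<close>

definition proj_T10 :: "(complex^'n::finite \<Rightarrow> real) \<Rightarrow> complex^'n \<Rightarrow> complex^'n \<Rightarrow> complex^'n \<Rightarrow> complex^'n" where
  "proj_T10 \<rho> p z u = (1 / drho_sq \<rho> p) *s (drho_sq \<rho> z *s u - normal_part \<rho> z u *s normal_vec \<rho> z)"

lemma normal_part_normal_vec: "normal_part \<rho> z (normal_vec \<rho> z) = drho_sq \<rho> z"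
  by (simp add: normal_part_def normal_vec_def drho_sq_def herm_def mult.commute)

lemma drho_sq_nonzero: "drho \<rho> z \<noteq> 0 \<Longrightarrow> drho_sq \<rho> z \<noteq> 0"
  using herm_self_eq_norm_sq[of "drho \<rho> z"] by (simp add: drho_sq_def)

lemma normal_part_proj_T10: "normal_part \<rho> z (proj_T10 \<rho> p z u) = 0"
  by (simp add: proj_T10_def normal_part_smult normal_part_diff normal_part_normal_vec)

lemma proj_T10_self: "drho_sq \<rho> p \<noteq> 0 \<Longrightarrow> normal_part \<rho> p u = 0 \<Longrightarrow> proj_T10 \<rho> p p u = u"
  by (simp add: proj_T10_def vec_eq_iff)

lemma proj_T10_linear: "Vector_Spaces.linear (*s) (*s) (proj_T10 \<rho> p z)"
  unfolding Vector_Spaces.linear_iff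
  by (simp add: vec.vector_space_axioms proj_T10_def normal_part_add normal_part_smult vec_eq_iff algebra_simps)

definition proj_err :: "(complex^'n::finite \<Rightarrow> real) \<Rightarrow> complex^'n \<Rightarrow> complex^'n \<Rightarrow> real" where
  "proj_err \<rho> p z = (cmod (drho_sq \<rho> z - drho_sq \<rho> p) + (\<Sum>j\<in>UNIV. cmod (drho \<rho> z $ j - drho \<rho> p $ j)) * norm (normal_vec \<rho> z)) / cmod (drho_sq \<rho> p)"

lemma proj_err_nonneg: "proj_err \<rho> p z \<ge> 0"
  by (simp add: proj_err_def sum_nonneg)

lemma norm_proj_T10_diff_le:
  assumes "drho_sq \<rho> p \<noteq> 0" "normal_part \<rho> p u = 0"
  shows "norm (proj_T10 \<rho> p z u - u) \<le> proj_err \<rho> p z * norm u"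
proof -
  have eq: "proj_T10 \<rho> p z u - u = (1 / drho_sq \<rho> p) *s ((drho_sq \<rho> z - drho_sq \<rho> p) *s u - normal_part \<rho> z u *s normal_vec \<rho> z)"
    using assms(1) by (simp add: proj_T10_def vec_eq_iff field_simps)
  have tz: "cmod (normal_part \<rho> z u) \<le> norm u * (\<Sum>j\<in>UNIV. cmod (drho \<rho> z $ j - drho \<rho> p $ j))"
  proof -
    have "normal_part \<rho> z u = normal_part \<rho> z u - normal_part \<rho> p u" using assms(2) by simp
    also have "\<dots> = (\<Sum>j\<in>UNIV. u$j * (drho \<rho> z $ j - drho \<rho> p $ j))"
      by (simp add: normal_part_def sum_subtractf ring_distribs)
    finally have "cmod (normal_part \<rho> z u) \<le> (\<Sum>j\<in>UNIV. cmod (u$j) * cmod (drho \<rho> z $ j - drho \<rho> p $ j))"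
      using norm_sum by (metis (no_types, lifting) norm_mult sum.cong)
    also have "\<dots> \<le> (\<Sum>j\<in>UNIV. norm u * cmod (drho \<rho> z $ j - drho \<rho> p $ j))"
      by (intro sum_mono mult_right_mono Finite_Cartesian_Product.norm_nth_le) auto
    finally show ?thesis by (simp add: sum_distrib_left)
  qed
  have "norm (proj_T10 \<rho> p z u - u) = norm ((drho_sq \<rho> z - drho_sq \<rho> p) *s u - normal_part \<rho> z u *s normal_vec \<rho> z) / cmod (drho_sq \<rho> p)"
    unfolding eq norm_vector_smult by (simp add: norm_divide)
  also have "\<dots> \<le> (cmod (drho_sq \<rho> z - drho_sq \<rho> p) * norm u + cmod (normal_part \<rho> z u) * norm (normal_vec \<rho> z)) / cmod (drho_sq \<rho> p)"
  proof (intro divide_right_mono order_trans[OF norm_triangle_ineq4] add_mono)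
    show "norm ((drho_sq \<rho> z - drho_sq \<rho> p) *s u) \<le> cmod (drho_sq \<rho> z - drho_sq \<rho> p) * norm u"
      by (simp only: norm_vector_smult order_refl)
    show "norm (normal_part \<rho> z u *s normal_vec \<rho> z) \<le> cmod (normal_part \<rho> z u) * norm (normal_vec \<rho> z)"
      by (simp only: norm_vector_smult order_refl)
  qed simp
  also have "\<dots> \<le> (cmod (drho_sq \<rho> z - drho_sq \<rho> p) * norm u + (norm u * (\<Sum>j\<in>UNIV. cmod (drho \<rho> z $ j - drho \<rho> p $ j))) * norm (normal_vec \<rho> z)) / cmod (drho_sq \<rho> p)"
    by (intro divide_right_mono add_left_mono mult_right_mono tz) auto
  also have "\<dots> = proj_err \<rho> p z * norm u" by (simp add: proj_err_def field_simps)
  finally show ?thesis .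
qed

definition levi_proj_err :: "(complex^'n::finite \<Rightarrow> real) \<Rightarrow> complex^'n \<Rightarrow> complex^'n \<Rightarrow> real" where
  "levi_proj_err \<rho> p z = matrix_abs_sum (levi_matrix \<rho> z - levi_matrix \<rho> p) + matrix_abs_sum (levi_matrix \<rho> z) * proj_err \<rho> p z * (2 + proj_err \<rho> p z)"

lemma norm_levi_proj_T10_diff_le:
  assumes "drho_sq \<rho> p \<noteq> 0" "normal_part \<rho> p u = 0"
  shows "cmod (levi \<rho> z (proj_T10 \<rho> p z u) (proj_T10 \<rho> p z u) - levi \<rho> p u u) \<le> levi_proj_err \<rho> p z * (norm u)^2"
proof -
  let ?v = "proj_T10 \<rho> p z u" and ?e = "proj_err \<rho> p z" and ?Cz = "levi_matrix \<rho> z" and ?Cp = "levi_matrix \<rho> p"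
  have d: "norm (?v - u) \<le> ?e * norm u" using norm_proj_T10_diff_le[OF assms] .
  have v: "norm ?v \<le> (1 + ?e) * norm u"
    using norm_triangle_ineq[of "?v - u" u] d by (simp add: algebra_simps)
  have eq: "levi \<rho> z ?v ?v - levi \<rho> p u u = sesq (?Cz - ?Cp) u u + sesq ?Cz (?v - u) ?v + sesq ?Cz u (?v - u)"
    by (simp add: levi_eq_sesq sesq_diff_matrix sesq_diff_left sesq_diff_right)
  have "cmod (levi \<rho> z ?v ?v - levi \<rho> p u u) \<le> cmod (sesq (?Cz - ?Cp) u u) + cmod (sesq ?Cz (?v - u) ?v) + cmod (sesq ?Cz u (?v - u))"
    unfolding eq by (rule order_trans[OF norm_triangle_ineq add_right_mono[OF norm_triangle_ineq]])
  also have "\<dots> \<le> matrix_abs_sum (?Cz - ?Cp) * norm u * norm u + matrix_abs_sum ?Cz * (?e * norm u) * ((1 + ?e) * norm u) + matrix_abs_sum ?Cz * norm u * (?e * norm u)"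
  proof (intro add_mono)
    show "cmod (sesq (?Cz - ?Cp) u u) \<le> matrix_abs_sum (?Cz - ?Cp) * norm u * norm u" by (rule norm_sesq_le)
    show "cmod (sesq ?Cz (?v - u) ?v) \<le> matrix_abs_sum ?Cz * (?e * norm u) * ((1 + ?e) * norm u)"
      by (rule order_trans[OF norm_sesq_le]) (intro mult_mono d v mult_nonneg_nonneg matrix_abs_sum_nonneg; simp add: proj_err_nonneg)
    show "cmod (sesq ?Cz u (?v - u)) \<le> matrix_abs_sum ?Cz * norm u * (?e * norm u)"
      by (rule order_trans[OF norm_sesq_le]) (intro mult_mono d mult_nonneg_nonneg matrix_abs_sum_nonneg; simp)
  qed
  also have "\<dots> = levi_proj_err \<rho> p z * (norm u)^2" by (simp add: levi_proj_err_def power2_eq_square algebra_simps)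
  finally show ?thesis .
qed

lemma norm_normal_vec: "norm (normal_vec \<rho> z) = norm (drho \<rho> z)"
  by (simp add: norm_vec_def normal_vec_def)

lemma continuous_proj_err:
  assumes "isCont (drho \<rho>) p"
  shows "isCont (proj_err \<rho> p) p"
proof -
  have "isCont (\<lambda>z. (cmod ((\<Sum>j\<in>UNIV. drho \<rho> z $ j * cnj (drho \<rho> z $ j)) - drho_sq \<rho> p)
      + (\<Sum>j\<in>UNIV. cmod (drho \<rho> z $ j - drho \<rho> p $ j)) * norm (drho \<rho> z)) * (1 / cmod (drho_sq \<rho> p))) p"
    by (intro continuous_intros assms)
  moreover have "proj_err \<rho> p = (\<lambda>z. (cmod ((\<Sum>j\<in>UNIV. drho \<rho> z $ j * cnj (drho \<rho> z $ j)) - drho_sq \<rho> p)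
      + (\<Sum>j\<in>UNIV. cmod (drho \<rho> z $ j - drho \<rho> p $ j)) * norm (drho \<rho> z)) * (1 / cmod (drho_sq \<rho> p)))"
    by (rule ext) (simp add: proj_err_def drho_sq_def herm_def norm_normal_vec)
  ultimately show ?thesis by simp
qed

lemma continuous_levi_proj_err:
  assumes "isCont (drho \<rho>) p" "isCont (levi_matrix \<rho>) p"
  shows "isCont (levi_proj_err \<rho> p) p"
proof -
  have "isCont (\<lambda>z. (\<Sum>j\<in>UNIV. \<Sum>k\<in>UNIV. cmod (levi_matrix \<rho> z $ j $ k - levi_matrix \<rho> p $ j $ k))
        + (\<Sum>j\<in>UNIV. \<Sum>k\<in>UNIV. cmod (levi_matrix \<rho> z $ j $ k)) * proj_err \<rho> p z * (2 + proj_err \<rho> p z)) p"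
    by (intro continuous_intros assms continuous_proj_err)
  moreover have "levi_proj_err \<rho> p = (\<lambda>z. (\<Sum>j\<in>UNIV. \<Sum>k\<in>UNIV. cmod (levi_matrix \<rho> z $ j $ k - levi_matrix \<rho> p $ j $ k))
        + (\<Sum>j\<in>UNIV. \<Sum>k\<in>UNIV. cmod (levi_matrix \<rho> z $ j $ k)) * proj_err \<rho> p z * (2 + proj_err \<rho> p z))"
    by (rule ext) (simp add: levi_proj_err_def matrix_abs_sum_def)
  ultimately show ?thesis by simp
qed

lemma proj_err_self: "proj_err \<rho> p p = 0" by (simp add: proj_err_def)
lemma levi_proj_err_self: "levi_proj_err \<rho> p p = 0" by (simp add: levi_proj_err_def proj_err_self)

lemma proj_T10_components: "proj_T10 \<rho> p z u = (\<chi> i. (1 / drho_sq \<rho> p) * ((\<Sum>j\<in>UNIV. drho \<rho> z $ j * cnj (drho \<rho> z $ j)) * u$i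
      - (\<Sum>j\<in>UNIV. u$j * drho \<rho> z $ j) * cnj (drho \<rho> z $ i)))"
  by (simp add: proj_T10_def vec_eq_iff drho_sq_def herm_def normal_part_def normal_vec_def diff_divide_distrib)

lemma Ck_proj_T10:
  fixes S :: "(complex^'n::finite) set"
  assumes "open S" "Ck k S (drho \<rho>)"
  shows "Ck k S (\<lambda>z. proj_T10 \<rho> p z u)"
proof -
  have c: "Ck k S (\<lambda>z. drho \<rho> z $ j)" for j
    using Ck_bounded_linear[OF assms(1) bounded_linear_vec_nth assms(2)] .
  have cc: "Ck k S (\<lambda>z. cnj (drho \<rho> z $ j))" for j using Ck_cnj[OF assms(1) c] .
  have n: "Ck k S (\<lambda>z. \<Sum>j\<in>UNIV. drho \<rho> z $ j * cnj (drho \<rho> z $ j))"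
    by (intro Ck_sum[OF assms(1)] Ck_mult[OF assms(1)] c cc) simp
  have t: "Ck k S (\<lambda>z. \<Sum>j\<in>UNIV. u$j * drho \<rho> z $ j)"
    by (intro Ck_sum[OF assms(1)] Ck_const_mult[OF assms(1)] c) simp
  have "Ck k S (\<lambda>z. \<chi> i. (1 / drho_sq \<rho> p) * ((\<Sum>j\<in>UNIV. drho \<rho> z $ j * cnj (drho \<rho> z $ j)) * u$i
      - (\<Sum>j\<in>UNIV. u$j * drho \<rho> z $ j) * cnj (drho \<rho> z $ i)))"
    by (intro Ck_vec[OF assms(1)] Ck_const_mult[OF assms(1)] Ck_diff[OF assms(1)] Ck_mult[OF assms(1)] n t cc Ck_const)
  then show ?thesis by (simp add: proj_T10_components)
qed

lemma continuous_zero_eventually_le: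
  fixes f :: "'a::metric_space \<Rightarrow> real"
  assumes "isCont f p" "f p = (0::real)" "e > 0"
  shows "eventually (\<lambda>z. f z \<le> e) (nhds p)"
proof -
  obtain d where d: "d > 0" "\<forall>z. dist z p < d \<longrightarrow> dist (f z) (f p) < e"
    using assms(1,3) unfolding continuous_at_eps_delta by blast
  then have "\<forall>z. dist z p < d \<longrightarrow> f z \<le> e" using assms(2) by (force simp: dist_real_def)
  then show ?thesis unfolding eventually_nhds_metric using d(1) by blast
qed

section \<open>Continuity of the vanishing eigenvalues\<close>

lemma linear_image_span_meets_span:
  fixes P :: "'a::field^'n::finite \<Rightarrow> 'a^'n"
  assumes lin: "Vector_Spaces.linear (*s) (*s) P" and injP: "inj_on P (vec.span A)"
    and A: "vec.independent A" and B: "vec.independent B"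
    and W: "vec.subspace W" "P ` vec.span A \<subseteq> W" "B \<subseteq> W" and dim: "vec.dim W < card A + card B"
  shows "\<exists>u \<in> vec.span A. u \<noteq> 0 \<and> P u \<in> vec.span B"
proof -
  define Q where "Q = P ` vec.span A"
  have Qs: "Q = vec.span (P ` A)" unfolding Q_def using vec.linear_span_image[OF lin] by simp
  have "vec.dim Q = card A"
    unfolding Qs vec.dim_span vec.dim_image_eq[OF lin injP] vec.dim_eq_card_independent[OF A] ..
  moreover have "vec.dim (vec.span B) = card B" by (rule vec.dim_span_eq_card_independent[OF B])
  moreover have "vec.dim {x + y |x y. x \<in> Q \<and> y \<in> vec.span B} \<le> vec.dim W"
  proof (rule vec.dim_subset)
    show "{x + y |x y. x \<in> Q \<and> y \<in> vec.span B} \<subseteq> W"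
      using W vec.span_minimal[OF W(3,1)] vec.subspace_add[OF W(1)] unfolding Q_def by blast
  qed
  ultimately have "vec.dim (Q \<inter> vec.span B) > 0"
    using vec.dim_sums_Int[of Q "vec.span B"] dim unfolding Qs by (simp add: vec.subspace_span)
  then have "\<not> Q \<inter> vec.span B \<subseteq> {0}" using vec.dim_eq_0 by (metis less_irrefl)
  then obtain w where w: "w \<in> Q" "w \<in> vec.span B" "w \<noteq> 0" by blast
  then obtain u where "u \<in> vec.span A" "w = P u" unfolding Q_def by blast
  moreover have "u \<noteq> 0" using calculation w(3) vec.linear_0[OF lin] by auto
  ultimately show ?thesis using w(2) by blast
qed

lemma exists_proj_T10_in_span:
  fixes \<rho> :: "complex^'n::finite \<Rightarrow> real"
  assumes ebp: "levi_eigenbasis \<rho> p mp ep" and ebz: "levi_eigenbasis \<rho> z mz ez"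
    and I1: "I1 \<subseteq> {..<CARD('n) - 1}" and I2: "I2 \<subseteq> {..<CARD('n) - 1}"
    and card: "card I1 + card I2 > CARD('n) - 1"
    and inj: "\<And>u. u \<in> vec.span (ep ` I1) \<Longrightarrow> proj_T10 \<rho> p z u = 0 \<Longrightarrow> u = 0"
  shows "\<exists>u \<in> vec.span (ep ` I1). u \<noteq> 0 \<and> proj_T10 \<rho> p z u \<in> vec.span (ez ` I2)"
proof (rule linear_image_span_meets_span[OF proj_T10_linear _ _ _ T10_subspace])
  let ?M = "CARD('n) - 1" and ?P = "proj_T10 \<rho> p z"
  have op: "orthonormal_family ?M ep" and oz: "orthonormal_family ?M ez"
    using ebp ebz by (simp_all add: levi_eigenbasis_def)
  have lin: "Vector_Spaces.linear (*s) (*s) ?P" by (rule proj_T10_linear)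
  show "inj_on ?P (vec.span (ep ` I1))"
  proof (rule inj_onI)
    fix u v assume uv: "u \<in> vec.span (ep ` I1)" "v \<in> vec.span (ep ` I1)" "?P u = ?P v"
    have "?P (u - v) = 0" using uv(3) vec.linear_diff[OF lin] by simp
    moreover have "u - v \<in> vec.span (ep ` I1)" using uv(1,2) vec.span_diff by blast
    ultimately show "u = v" using inj by fastforce
  qed
  show "vec.independent (ep ` I1)" "vec.independent (ez ` I2)"
    using orthonormal_family_independent op oz I1 I2 by blast+
  show "?P ` vec.span (ep ` I1) \<subseteq> T10 \<rho> z"
    using normal_part_proj_T10 by (auto simp: T10_eq_normal_part)
  show "ez ` I2 \<subseteq> T10 \<rho> z" using span_eigenbasis_subset_T10[OF ebz I2] vec.span_superset by blast
  have "vec.dim (T10 \<rho> z) \<le> card (ez ` {..<?M})"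
    using T10_eq_span_eigenbasis[OF ebz] by (intro vec.dim_le_card) auto
  also have "\<dots> \<le> ?M" using card_image_le[of "{..<?M}" ez] by simp
  also have "\<dots> < card I1 + card I2" using card .
  also have "card I1 + card I2 = card (ep ` I1) + card (ez ` I2)"
    using card_image orthonormal_family_inj[OF op] orthonormal_family_inj[OF oz] I1 I2 inj_on_subset
    by metis
  finally show "vec.dim (T10 \<rho> z) < card (ep ` I1) + card (ez ` I2)" .
qed

lemma levi_self_eigen_sum:
  fixes \<rho> :: "complex^'n::finite \<Rightarrow> real"
  assumes eb: "levi_eigenbasis \<rho> z mu e" and I: "I \<subseteq> {..<CARD('n) - 1}" and v: "v \<in> vec.span (e ` I)"
  shows "Re (levi \<rho> z v v) = (\<Sum>i\<in>I. (cmod (herm v (e i)))^2 * mu i)"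
proof -
  let ?M = "CARD('n) - 1"
  have o: "orthonormal_family ?M e" using eb by (simp add: levi_eigenbasis_def)
  have vT: "v \<in> T10 \<rho> z" using span_eigenbasis_subset_T10[OF eb I] v by auto
  have z: "herm v (e i) = 0" if "i < ?M" "i \<notin> I" for i using orthonormal_span_expand(2)[OF o I v] that by blast
  have "levi \<rho> z v v = (\<Sum>i<?M. herm v (e i) * cnj (herm v (e i)) * complex_of_real (mu i))"
    by (rule levi_eigenbasis_expand[OF eb vT vT])
  also have "\<dots> = (\<Sum>i\<in>I. herm v (e i) * cnj (herm v (e i)) * complex_of_real (mu i))"
    by (rule sum.mono_neutral_right) (use I z in auto)
  also have "\<dots> = complex_of_real (\<Sum>i\<in>I. (cmod (herm v (e i)))^2 * mu i)"
    by (simp add: mult_cnj_eq_cmod_sq)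
  finally show ?thesis by simp
qed

text \<open>Min-max comparison: a subspace spanned by eigenvectors at \<open>p\<close>, moved to \<open>z\<close> by
  \<^const>\<open>proj_T10\<close>, meets a subspace spanned by eigenvectors at \<open>z\<close> when the dimensions
  add up to more than \<open>n - 1\<close>, and the Levi forms at \<open>p\<close> and \<open>z\<close> agree on such a pair of vectors
  up to the errors \<^const>\<open>proj_err\<close> and \<^const>\<open>levi_proj_err\<close>.\<close>

lemma levi_comparison_pair:
  fixes \<rho> :: "complex^'n::finite \<Rightarrow> real"
  assumes ebp: "levi_eigenbasis \<rho> p mp ep" and ebz: "levi_eigenbasis \<rho> z mz ez"
    and I1: "I1 \<subseteq> {..<CARD('n) - 1}" and I2: "I2 \<subseteq> {..<CARD('n) - 1}"
    and card: "card I1 + card I2 > CARD('n) - 1" and nz: "drho_sq \<rho> p \<noteq> 0"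
    and e1: "proj_err \<rho> p z \<le> 1/2" and e2: "levi_proj_err \<rho> p z \<le> \<epsilon>/4" and \<epsilon>: "\<epsilon> \<ge> 0"
  obtains u v where "u \<in> vec.span (ep ` I1)" "v \<in> vec.span (ez ` I2)" "v \<noteq> 0"
    "\<bar>Re (levi \<rho> z v v) - Re (levi \<rho> p u u)\<bar> \<le> \<epsilon> * (norm v)^2"
proof -
  let ?P = "proj_T10 \<rho> p z"
  have tu: "normal_part \<rho> p u = 0" if "u \<in> vec.span (ep ` I1)" for u
    using span_eigenbasis_subset_T10[OF ebp I1] that by (auto simp: T10_eq_normal_part)
  have err: "norm (?P u - u) \<le> norm u / 2" if "u \<in> vec.span (ep ` I1)" for u
  proof -
    have "norm (?P u - u) \<le> proj_err \<rho> p z * norm u" using norm_proj_T10_diff_le[OF nz tu[OF that]] .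
    also have "\<dots> \<le> 1/2 * norm u" using e1 by (intro mult_right_mono) auto
    finally show ?thesis by simp
  qed
  obtain u where u: "u \<in> vec.span (ep ` I1)" "u \<noteq> 0" "?P u \<in> vec.span (ez ` I2)"
    using exists_proj_T10_in_span[OF ebp ebz I1 I2 card] err by fastforce
  define v where "v = ?P u"
  have uv: "norm u \<le> 2 * norm v"
    using err[OF u(1)] norm_triangle_ineq4[of "v" "v - u"] unfolding v_def[symmetric]
    by (simp add: norm_minus_commute)
  have "\<bar>Re (levi \<rho> z v v) - Re (levi \<rho> p u u)\<bar> \<le> cmod (levi \<rho> z v v - levi \<rho> p u u)"
    using abs_Re_le_cmod[of "levi \<rho> z v v - levi \<rho> p u u"] by simp
  also have "\<dots> \<le> levi_proj_err \<rho> p z * (norm u)^2"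
    unfolding v_def by (rule norm_levi_proj_T10_diff_le[OF nz tu[OF u(1)]])
  also have "\<dots> \<le> \<epsilon>/4 * (2 * norm v)^2"
    using e2 uv \<epsilon> by (intro mult_mono power_mono) auto
  finally have "\<bar>Re (levi \<rho> z v v) - Re (levi \<rho> p u u)\<bar> \<le> \<epsilon> * (norm v)^2"
    by (simp add: power_mult_distrib)
  moreover have "v \<noteq> 0" using uv u(2) by auto
  ultimately show ?thesis using that u(1,3) v_def by blast
qed

lemma Re_levi_le_on_lower_span:
  fixes \<rho> :: "complex^'n::finite \<Rightarrow> real"
  assumes ev: "levi_eigenvalues \<rho> z mu" and eb: "levi_eigenbasis \<rho> z mu e"
    and k: "k < CARD('n) - 1" and v: "v \<in> vec.span (e ` {..k})"
  shows "Re (levi \<rho> z v v) \<le> mu k * (norm v)^2"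
proof -
  have I: "{..k} \<subseteq> {..<CARD('n) - 1}" using k by auto
  have "Re (levi \<rho> z v v) \<le> (\<Sum>i\<in>{..k}. (cmod (herm v (e i)))^2 * mu k)"
    unfolding levi_self_eigen_sum[OF eb I v] using k levi_eigenvalues_sorted[OF ev]
    by (intro sum_mono mult_left_mono) auto
  also have "\<dots> = mu k * (norm v)^2"
    using orthonormal_span_parseval[OF _ I v] eb
    by (simp add: levi_eigenbasis_def sum_distrib_left mult.commute)
  finally show ?thesis .
qed

lemma Re_levi_ge_on_upper_span:
  fixes \<rho> :: "complex^'n::finite \<Rightarrow> real"
  assumes ev: "levi_eigenvalues \<rho> z mu" and eb: "levi_eigenbasis \<rho> z mu e"
    and v: "v \<in> vec.span (e ` {k..<CARD('n) - 1})"
  shows "mu k * (norm v)^2 \<le> Re (levi \<rho> z v v)"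
proof -
  have I: "{k..<CARD('n) - 1} \<subseteq> {..<CARD('n) - 1}" by auto
  have "mu k * (norm v)^2 = (\<Sum>i\<in>{k..<CARD('n) - 1}. (cmod (herm v (e i)))^2 * mu k)"
    using orthonormal_span_parseval[OF _ I v] eb
    by (simp add: levi_eigenbasis_def sum_distrib_left mult.commute)
  also have "\<dots> \<le> Re (levi \<rho> z v v)"
    unfolding levi_self_eigen_sum[OF eb I v] using levi_eigenvalues_sorted[OF ev]
    by (intro sum_mono mult_left_mono) auto
  finally show ?thesis .
qed

lemma abs_eigenvalue_le_if_errors_small:
  fixes \<rho> :: "complex^'n::finite \<Rightarrow> real"
  assumes evp: "levi_eigenvalues \<rho> p mp" and evz: "levi_eigenvalues \<rho> z mz"
    and k: "k < CARD('n) - 1" "mp k = 0" and nz: "drho_sq \<rho> p \<noteq> 0"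
    and e1: "proj_err \<rho> p z \<le> 1/2" and e2: "levi_proj_err \<rho> p z \<le> \<epsilon>/4" and \<epsilon>: "\<epsilon> \<ge> 0"
  shows "\<bar>mz k\<bar> \<le> \<epsilon>"
proof -
  let ?M = "CARD('n) - 1"
  obtain ep ez where ebp: "levi_eigenbasis \<rho> p mp ep" and ebz: "levi_eigenbasis \<rho> z mz ez"
    using levi_eigenvalues_imp_eigenbasis evp evz by metis
  note compare = levi_comparison_pair[OF ebp ebz _ _ _ nz e1 e2 \<epsilon>]
  have lo: "{..k} \<subseteq> {..<?M}" and up: "{k..<?M} \<subseteq> {..<?M}" and card: "card {..k} + card {k..<?M} > ?M"
    using k by auto
  obtain u v where u: "u \<in> vec.span (ep ` {..k})" and v: "v \<in> vec.span (ez ` {k..<?M})" "v \<noteq> 0"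
    and uv: "\<bar>Re (levi \<rho> z v v) - Re (levi \<rho> p u u)\<bar> \<le> \<epsilon> * (norm v)^2"
    using compare[OF lo up card] by blast
  have "mz k * (norm v)^2 \<le> \<epsilon> * (norm v)^2"
    using Re_levi_ge_on_upper_span[OF evz ebz v(1)] Re_levi_le_on_lower_span[OF evp ebp k(1) u] k(2) uv
    by simp
  then have upper: "mz k \<le> \<epsilon>" using v(2) by simp
  obtain u' v' where u': "u' \<in> vec.span (ep ` {k..<?M})" and v': "v' \<in> vec.span (ez ` {..k})" "v' \<noteq> 0"
    and uv': "\<bar>Re (levi \<rho> z v' v') - Re (levi \<rho> p u' u')\<bar> \<le> \<epsilon> * (norm v')^2"
    using compare[OF up lo] card by (metis add.commute)
  have "- \<epsilon> * (norm v')^2 \<le> mz k * (norm v')^2"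
    using Re_levi_le_on_lower_span[OF evz ebz k(1) v'(1)] Re_levi_ge_on_upper_span[OF evp ebp u'] k(2) uv'
    by simp
  moreover have "(norm v')^2 > 0" using v'(2) by simp
  ultimately have "- \<epsilon> \<le> mz k" using mult_right_le_imp_le[of "- \<epsilon>" "(norm v')^2" "mz k"] by simp
  with upper show ?thesis by simp
qed

lemma eventually_kernel_eigenvalue_small:
  fixes \<rho> :: "complex^'n::finite \<Rightarrow> real"
  assumes evs: "\<forall>z \<in> frontier \<Omega>. levi_eigenvalues \<rho> z (\<mu> z)" and p: "p \<in> frontier \<Omega>"
    and k: "k < CARD('n) - 1" "\<mu> p k = 0" and nz: "drho_sq \<rho> p \<noteq> 0"
    and cont: "isCont (drho \<rho>) p" "isCont (levi_matrix \<rho>) p" and \<epsilon>: "\<epsilon> > 0"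
  shows "eventually (\<lambda>z. z \<in> frontier \<Omega> \<longrightarrow> \<bar>\<mu> z k\<bar> \<le> \<epsilon>) (nhds p)"
proof -
  have "eventually (\<lambda>z. proj_err \<rho> p z \<le> 1/2) (nhds p)"
    by (rule continuous_zero_eventually_le[OF continuous_proj_err[OF cont(1)] proj_err_self]) simp
  moreover have "eventually (\<lambda>z. levi_proj_err \<rho> p z \<le> \<epsilon>/4) (nhds p)"
    by (rule continuous_zero_eventually_le[OF continuous_levi_proj_err[OF cont] levi_proj_err_self])
      (simp add: \<epsilon>)
  ultimately show ?thesis
  proof eventually_elim
    case (elim z)
    show ?case
      using abs_eigenvalue_le_if_errors_small[of \<rho> p "\<mu> p" z "\<mu> z" k \<epsilon>] evs p k nz elim \<epsilon> by auto
  qed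
qed

lemma eventually_norm_le_linear:
  assumes "(D has_derivative D') (at p)" "D p = 0"
  obtains C where "C \<ge> 0" "eventually (\<lambda>w. norm (D w) \<le> C * norm (w - p)) (nhds p)"
proof -
  obtain K where K: "K > 0" "\<And>x. norm (D' x) \<le> norm x * K"
    using bounded_linear.pos_bounded[OF has_derivative_bounded_linear[OF assms(1)]] by blast
  obtain d where d: "d > 0" "\<And>y. norm (y - p) < d \<Longrightarrow> norm (D y - D p - D' (y - p)) \<le> 1 * norm (y - p)"
    using assms(1) unfolding has_derivative_at_alt by (meson zero_less_one)
  have "norm (D y) \<le> (K + 1) * norm (y - p)" if "dist y p < d" for y
  proof -
    have "norm (D y) \<le> norm (D y - D' (y - p)) + norm (D' (y - p))"
      using norm_triangle_ineq4[of "D y - D' (y - p)" "- D' (y - p)"] by (simp add: norm_triangle_sub)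
    also have "\<dots> \<le> 1 * norm (y - p) + norm (y - p) * K"
      using d(2)[of y] that assms(2) K(2)[of "y - p"] by (simp add: dist_norm)
    finally show ?thesis by (simp add: algebra_simps)
  qed
  then have "eventually (\<lambda>w. norm (D w) \<le> (K + 1) * norm (w - p)) (nhds p)"
    unfolding eventually_nhds_metric using d(1) by blast
  moreover have "K + 1 \<ge> 0" using K(1) by simp
  ultimately show ?thesis using that by blast
qed

section \<open>Derivatives of sections of \<open>\<tilde>K\<^sup>1\<^sup>,\<^sup>0\<^sub>p\<close>\<close>

locale levi_boundary_point = sublevel_boundary \<Omega> V \<rho>
  for \<Omega> V :: "(complex^'n::finite) set" and \<rho> :: "complex^'n \<Rightarrow> real" +
  fixes \<mu> :: "complex^'n \<Rightarrow> nat \<Rightarrow> real" and p :: "complex^'n" and U :: "(complex^'n) set"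
  assumes eigenvalues: "\<And>z. z \<in> frontier \<Omega> \<Longrightarrow> levi_eigenvalues \<rho> z (\<mu> z)"
    and boundary_point: "p \<in> frontier \<Omega>"
    and open_U: "open U" and p_in_U: "p \<in> U" and U_subset: "U \<subseteq> V"
    and eigenvalue_gap: "\<And>z j k. z \<in> U \<inter> frontier \<Omega> \<Longrightarrow> j < CARD('n) - 1 \<Longrightarrow> k < CARD('n) - 1 \<Longrightarrow>
           \<mu> p k \<noteq> 0 \<Longrightarrow> \<mu> p j = 0 \<Longrightarrow> \<mu> z k \<noteq> \<mu> z j"
    and drho_C2: "Ck 2 V (drho \<rho>)" and levi_matrix_C2: "Ck 2 V (levi_matrix \<rho>)"
    and drho_sq_nonzero_at: "drho_sq \<rho> p \<noteq> 0"
begin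

definition kernel_indices :: "nat set" where
  "kernel_indices = {k. k < CARD('n) - 1 \<and> \<mu> p k = 0}"

lemma p_in_V: "p \<in> V"
  using p_in_U U_subset by blast

lemma drho_C1: "Ck 1 V (drho \<rho>)"
  by (rule Ck_mono[OF _ drho_C2]) simp

lemma has_derivative_drho: "z \<in> V \<Longrightarrow> (drho \<rho> has_derivative Dir (drho \<rho>) z) (at z)"
  using Ck_has_derivative[OF drho_C2] by simp

lemma has_derivative_levi_matrix: "z \<in> V \<Longrightarrow> (levi_matrix \<rho> has_derivative Dir (levi_matrix \<rho>) z) (at z)"
  using Ck_has_derivative[OF levi_matrix_C2] by simp

lemma near_kernel_subset_span:
  assumes z: "z \<in> U" "z \<in> frontier \<Omega>" and e: "levi_eigenbasis \<rho> z (\<mu> z) e"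
  shows "cspan (near_kernel_eigvecs \<rho> z (\<mu> p) (\<mu> z)) \<subseteq> vec.span (e ` kernel_indices)"
  unfolding kernel_indices_def using eigenvalue_gap z by (intro near_kernel_span_subset[OF e]) blast

lemma eventually_norm_proj_T10_le:
  assumes b: "normal_part \<rho> p b = 0"
  shows "eventually (\<lambda>w. norm (proj_T10 \<rho> p w b) \<le> 2 * norm b) (nhds p)"
proof -
  have "isCont (drho \<rho>) p"
    using has_derivative_continuous[OF has_derivative_drho] p_in_U U_subset by blast
  then have "eventually (\<lambda>w. proj_err \<rho> p w \<le> 1) (nhds p)"
    by (intro continuous_zero_eventually_le[OF continuous_proj_err proj_err_self]) auto
  then show ?thesis
  proof eventually_elim
    case (elim w)
    have "norm (proj_T10 \<rho> p w b - b) \<le> proj_err \<rho> p w * norm b"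
      by (rule norm_proj_T10_diff_le[OF drho_sq_nonzero_at b])
    also have "\<dots> \<le> 1 * norm b" using elim by (intro mult_right_mono) auto
    finally show ?case using norm_triangle_ineq[of "proj_T10 \<rho> p w b - b" b] by simp
  qed
qed

lemma eventually_kernel_eigenvalues_small:
  assumes "\<epsilon> > 0"
  shows "eventually (\<lambda>w. w \<in> frontier \<Omega> \<longrightarrow> (\<forall>k\<in>kernel_indices. \<bar>\<mu> w k\<bar> \<le> \<epsilon>)) (nhds p)"
proof -
  have "isCont (drho \<rho>) p" "isCont (levi_matrix \<rho>) p"
    using has_derivative_continuous[OF has_derivative_drho] has_derivative_continuous[OF has_derivative_levi_matrix]
      p_in_U U_subset by blast+
  note cont = this
  have evs: "\<forall>z\<in>frontier \<Omega>. levi_eigenvalues \<rho> z (\<mu> z)" using eigenvalues by blast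
  have "\<forall>k\<in>kernel_indices. eventually (\<lambda>w. w \<in> frontier \<Omega> \<longrightarrow> \<bar>\<mu> w k\<bar> \<le> \<epsilon>) (nhds p)"
  proof
    fix k assume "k \<in> kernel_indices"
    then have k: "k < CARD('n) - 1" "\<mu> p k = 0" by (auto simp: kernel_indices_def)
    show "eventually (\<lambda>w. w \<in> frontier \<Omega> \<longrightarrow> \<bar>\<mu> w k\<bar> \<le> \<epsilon>) (nhds p)"
      by (rule eventually_kernel_eigenvalue_small[OF evs boundary_point k drho_sq_nonzero_at cont assms])
  qed
  from eventually_ball_finite[OF _ this] show ?thesis
    by (auto simp: kernel_indices_def elim: eventually_mono)
qed

text \<open>A section \<open>D\<close> of the near-kernel eigenspaces vanishing at \<open>p\<close> pairs to \<open>o(|w - p|)\<close>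
  with any section of \<open>T\<^sup>1\<^sup>,\<^sup>0\<close>: the first factor is \<open>O(|w - p|)\<close> and the Levi form is small on it,
  because the relevant eigenvalues tend to \<open>0\<close>.\<close>

lemma levi_near_kernel_little_o:
  assumes D: "(D has_derivative D') (at p)" "D p = 0"
      "\<forall>z\<in>U \<inter> frontier \<Omega>. D z \<in> cspan (near_kernel_eigvecs \<rho> z (\<mu> p) (\<mu> z))"
    and b: "normal_part \<rho> p b = 0"
  shows "\<forall>\<epsilon>>0. \<exists>\<delta>>0. \<forall>w\<in>frontier \<Omega>. norm (w - p) < \<delta> \<longrightarrow>
           norm (levi \<rho> w (D w) (proj_T10 \<rho> p w b)) \<le> \<epsilon> * norm (w - p)"
proof (intro allI impI)
  fix \<epsilon> :: real assume \<epsilon>: "\<epsilon> > 0"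
  let ?J = kernel_indices
  obtain C where C: "C \<ge> 0" "eventually (\<lambda>w. norm (D w) \<le> C * norm (w - p)) (nhds p)"
    using eventually_norm_le_linear[OF D(1,2)] by blast
  define A where "A = (real (card ?J) + 1) * (C + 1) * (2 * norm b + 1)"
  have A: "A > 0" using C(1) by (simp add: A_def add_nonneg_pos)
  have "eventually (\<lambda>w. w \<in> frontier \<Omega> \<longrightarrow> (\<forall>k\<in>?J. \<bar>\<mu> w k\<bar> \<le> \<epsilon> / A)) (nhds p)"
    using eventually_kernel_eigenvalues_small \<epsilon> A by simp
  with eventually_nhds_in_open[OF open_U p_in_U] C(2) eventually_norm_proj_T10_le[OF b]
  have "eventually (\<lambda>w. w \<in> frontier \<Omega> \<longrightarrow> norm (levi \<rho> w (D w) (proj_T10 \<rho> p w b)) \<le> \<epsilon> * norm (w - p)) (nhds p)"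
  proof (eventually_elim, intro impI)
    case (elim w)
    let ?B = "proj_T10 \<rho> p w b"
    assume w: "w \<in> frontier \<Omega>"
    obtain e where e: "levi_eigenbasis \<rho> w (\<mu> w) e" using levi_eigenvalues_imp_eigenbasis eigenvalues w by blast
    have "norm (levi \<rho> w (D w) ?B) \<le> (\<Sum>k\<in>?J. \<bar>\<mu> w k\<bar>) * norm (D w) * norm ?B"
    proof (rule norm_levi_le_eigenvalue_sum[OF e])
      show "?J \<subseteq> {..<CARD('n) - 1}" by (auto simp: kernel_indices_def)
      show "D w \<in> vec.span (e ` ?J)" using near_kernel_subset_span[OF elim(1) w e] D(3) elim(1) w by blast
      show "?B \<in> T10 \<rho> w" by (simp add: T10_eq_normal_part normal_part_proj_T10)
    qed
    also have "\<dots> \<le> (real (card ?J) * (\<epsilon> / A)) * (C * norm (w - p)) * (2 * norm b)"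
    proof (intro mult_mono)
      show "(\<Sum>k\<in>?J. \<bar>\<mu> w k\<bar>) \<le> real (card ?J) * (\<epsilon> / A)"
        using sum_bounded_above[of ?J "\<lambda>k. \<bar>\<mu> w k\<bar>" "\<epsilon> / A"] elim(4) w by simp
    qed (use elim C \<epsilon> A in \<open>auto intro!: mult_nonneg_nonneg\<close>)
    also have "\<dots> = (\<epsilon> * norm (w - p)) * ((real (card ?J) * C * (2 * norm b)) / A)"
      by (simp add: field_simps)
    also have "\<dots> \<le> (\<epsilon> * norm (w - p)) * 1"
    proof (intro mult_left_mono)
      have "real (card ?J) * C * (2 * norm b) \<le> A"
        unfolding A_def using C(1) by (intro mult_mono) auto
      then show "real (card ?J) * C * (2 * norm b) / A \<le> 1" using A by simp
    qed (use \<epsilon> in auto)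
    finally show "norm (levi \<rho> w (D w) ?B) \<le> \<epsilon> * norm (w - p)" by simp
  qed
  then show "\<exists>\<delta>>0. \<forall>w\<in>frontier \<Omega>. norm (w - p) < \<delta> \<longrightarrow>
      norm (levi \<rho> w (D w) (proj_T10 \<rho> p w b)) \<le> \<epsilon> * norm (w - p)"
    unfolding eventually_nhds_metric by (auto simp: dist_norm)
qed

lemma derivative_in_levi_kernel:
  assumes D: "(D has_derivative D') (at p)" "D p = 0"
      "\<forall>z\<in>U \<inter> frontier \<Omega>. D z \<in> cspan (near_kernel_eigvecs \<rho> z (\<mu> p) (\<mu> z))"
    and W: "W \<in> Tb \<rho> p"
  shows "D' W \<in> Kker \<rho> p"
proof -
  have "(\<lambda>h. normal_part \<rho> p (D' h) + (\<Sum>j\<in>UNIV. D p $ j * Dir (drho \<rho>) p h $ j)) W = 0"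
  proof (rule tangential_derivative_zero[OF boundary_point has_derivative_normal_part[OF D(1) has_derivative_drho[OF p_in_V]]
        _ open_U p_in_U])
    show "Dir \<rho> p W = 0" using W by (simp add: mem_Tb_iff)
    show "normal_part \<rho> z (D z) = 0" if "z \<in> U" "z \<in> frontier \<Omega>" for z
      using D(3) that cspan_near_kernel_eigvecs_subset_T10 by (force simp: T10_eq_normal_part)
  qed
  then have normal: "normal_part \<rho> p (D' W) = 0" using D(2) by simp
  have "levi \<rho> p (D' W) b = 0" if b: "b \<in> T10 \<rho> p" for b
  proof -
    have tb: "normal_part \<rho> p b = 0" using b by (simp add: T10_eq_normal_part)
    define B where "B z = proj_T10 \<rho> p z b" for z
    have "Ck 1 V B" unfolding B_def[abs_def] by (rule Ck_proj_T10[OF open_nbhd drho_C1])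
    then have Bd: "(B has_derivative Dir B p) (at p)" using Ck_has_derivative p_in_V by blast
    have Bp: "B p = b" unfolding B_def by (rule proj_T10_self[OF drho_sq_nonzero_at tb])
    have "((\<lambda>z. levi \<rho> z (D z) (proj_T10 \<rho> p z b)) has_derivative (\<lambda>h. levi \<rho> p (D' h) b)) (at p)"
      using sesq_has_derivative[OF has_derivative_levi_matrix[OF p_in_V] D(1) Bd] D(2) Bp
      unfolding levi_eq_sesq B_def by simp
    then show ?thesis
      using tangential_derivative_zero_if_small[OF boundary_point _ _ levi_near_kernel_little_o[OF D tb]] W
      by (simp add: mem_Tb_iff)
  qed
  then show ?thesis using normal by (simp add: Kker_def T10_eq_normal_part)
qed

end

section \<open>Second derivatives of the Levi form along \<open>\<tilde>K\<^sup>1\<^sup>,\<^sup>0\<^sub>p\<close>\<close>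

context levi_boundary_point
begin

text \<open>Applied to the extension \<open>S z = proj_T10 \<rho> p z a\<close> of \<open>a\<close>, the condition
  \<open>M p \<in> K\<^sup>1\<^sup>,\<^sup>0\<^sub>p\<^sub>,\<^sub>W\<close> kills the \<open>W\<close>-derivative of \<open>\<L>(M, S)\<close>; by hermitian symmetry on the
  boundary the \<open>W\<close>-derivative of \<open>\<L>(S, M)\<close> vanishes too, and that is the identity below.\<close>

lemma KX_derivative_identity:
  assumes MC: "Ck 1 U M" and MT: "\<forall>z\<in>U \<inter> frontier \<Omega>. M z \<in> T10 \<rho> z"
    and MK: "M p \<in> KX \<Omega> \<rho> p W" and W: "W \<in> Tb \<rho> p" and a: "a \<in> Kker \<rho> p"
  shows "sesq (Dir (levi_matrix \<rho>) p W) a (M p) + sesq (levi_matrix \<rho> p) (Dir (\<lambda>z. proj_T10 \<rho> p z a) p W) (M p)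
          + sesq (levi_matrix \<rho> p) a (Dir M p W) = 0"
proof -
  let ?C = "levi_matrix \<rho>"
  define S where "S z = proj_T10 \<rho> p z a" for z
  have "Ck 1 U S"
    unfolding S_def[abs_def] by (rule Ck_proj_T10[OF open_U Ck_subset[OF drho_C1 U_subset]])
  then have Sd: "(S has_derivative Dir S p) (at p)" using Ck_has_derivative p_in_U by blast
  have Sp: "S p = a"
    unfolding S_def using proj_T10_self[OF drho_sq_nonzero_at] a by (simp add: Kker_def T10_eq_normal_part)
  have ST: "S z \<in> T10 \<rho> z" for z unfolding S_def by (simp add: T10_eq_normal_part normal_part_proj_T10)
  have Md: "(M has_derivative Dir M p) (at p)" using Ck_has_derivative[OF MC p_in_U] by simp
  note Cd = has_derivative_levi_matrix[OF p_in_V]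
  have "Dir (\<lambda>z. levi \<rho> z (M z) (S z)) p W = 0"
    using KX_derivative_zero[OF MK a open_U p_in_U MC \<open>Ck 1 U S\<close> refl Sp] MT ST by simp
  define g' where "g' h = sesq (Dir ?C p h) (M p) a + sesq (?C p) (Dir M p h) a + sesq (?C p) (M p) (Dir S p h)" for h
  define g2' where "g2' h = sesq (Dir ?C p h) a (M p) + sesq (?C p) (Dir S p h) (M p) + sesq (?C p) a (Dir M p h)" for h
  have Gd: "((\<lambda>z. levi \<rho> z (M z) (S z)) has_derivative g') (at p)"
    unfolding levi_eq_sesq g'_def[abs_def] using sesq_has_derivative[OF Cd Md Sd] by (simp only: Sp)
  have G2d: "((\<lambda>z. levi \<rho> z (S z) (M z)) has_derivative g2') (at p)"
    unfolding levi_eq_sesq g2'_def[abs_def] using sesq_has_derivative[OF Cd Sd Md] by (simp only: Sp)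
  have "g' W = 0" using \<open>Dir (\<lambda>z. levi \<rho> z (M z) (S z)) p W = 0\<close> has_derivative_imp_Dir_eq[OF Gd] by simp
  have "(\<lambda>h. g2' h - cnj (g' h)) W = 0"
  proof (rule tangential_derivative_zero[OF boundary_point has_derivative_diff[OF G2d has_derivative_cnj[OF Gd]]
        _ open_U p_in_U])
    show "Dir \<rho> p W = 0" using W by (simp add: mem_Tb_iff)
    show "levi \<rho> w (S w) (M w) - cnj (levi \<rho> w (M w) (S w)) = 0" if "w \<in> U" "w \<in> frontier \<Omega>" for w
    proof -
      have "M w \<in> T10 \<rho> w" using MT that by blast
      then show ?thesis using levi_hermitian[OF eigenvalues[OF that(2)] ST] by simp
    qed
  qed
  then show ?thesis using \<open>g' W = 0\<close> by (simp add: g2'_def S_def[abs_def])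
qed

lemma normal_part_Dir_proj_T10:
  assumes "normal_part \<rho> p a = 0"
  shows "normal_part \<rho> p (Dir (\<lambda>z. proj_T10 \<rho> p z a) p W) = - (\<Sum>j\<in>UNIV. a $ j * Dir (drho \<rho>) p W $ j)"
proof -
  have "Ck 1 V (\<lambda>z. proj_T10 \<rho> p z a)" by (rule Ck_proj_T10[OF open_nbhd drho_C1])
  then have "((\<lambda>z. proj_T10 \<rho> p z a) has_derivative Dir (\<lambda>z. proj_T10 \<rho> p z a) p) (at p)"
    using Ck_has_derivative p_in_V by blast
  from has_derivative_normal_part[OF this has_derivative_drho[OF p_in_V]]
  have "((\<lambda>z. 0) has_derivative (\<lambda>h. normal_part \<rho> p (Dir (\<lambda>z. proj_T10 \<rho> p z a) p h)
      + (\<Sum>j\<in>UNIV. proj_T10 \<rho> p p a $ j * Dir (drho \<rho>) p h $ j))) (at p)"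
    by (simp add: normal_part_proj_T10)
  from fun_cong[OF Deriv.has_derivative_zero_unique[OF this], of W] show ?thesis
    using proj_T10_self[OF drho_sq_nonzero_at assms] by (simp add: eq_neg_iff_add_eq_0)
qed

text \<open>Differentiating \<open>\<partial>\<rho>(D) = 0\<close> along the tangent field \<open>Yf\<close> and then along \<open>X\<close>.\<close>

lemma normal_part_second_Dir:
  assumes DC: "Ck 2 U D" and Dp: "D p = 0"
    and DE: "\<forall>z\<in>U \<inter> frontier \<Omega>. D z \<in> cspan (near_kernel_eigvecs \<rho> z (\<mu> p) (\<mu> z))"
    and YfC: "Ck 1 U Yf" and Yfp: "Yf p = Y" and YfT: "\<forall>z\<in>U \<inter> frontier \<Omega>. Yf z \<in> Tb \<rho> z"
    and X: "X \<in> Tb \<rho> p"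
  shows "normal_part \<rho> p (Dir (\<lambda>z. Dir D z (Yf z)) p X)
    = - (\<Sum>j\<in>UNIV. Dir D p Y $ j * Dir (drho \<rho>) p X $ j) - (\<Sum>j\<in>UNIV. Dir D p X $ j * Dir (drho \<rho>) p Y $ j)"
proof -
  define A where "A z = Dir D z (Yf z)" for z
  define Q where "Q z = Dir (drho \<rho>) z (Yf z)" for z
  have Dd: "(D has_derivative Dir D z) (at z)" if "z \<in> U" for z using Ck_has_derivative[OF DC that] by simp
  have Ydp: "Yf differentiable (at p)" using YfC p_in_U by simp
  have Ah: "(A has_derivative Dir A p) (at p)"
    unfolding A_def[abs_def] by (rule Ck_Dir_along_has_derivative[OF DC _ open_U p_in_U Ydp]) simp
  have Qh: "(Q has_derivative Dir Q p) (at p)"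
    unfolding Q_def[abs_def] by (rule Ck_Dir_along_has_derivative[OF drho_C2 _ open_nbhd p_in_V Ydp]) simp
  define Psi where "Psi z = normal_part \<rho> z (A z) + (\<Sum>j\<in>UNIV. D z $ j * Q z $ j)" for z
  have Psid: "(Psi has_derivative (\<lambda>h. (normal_part \<rho> p (Dir A p h) + (\<Sum>j\<in>UNIV. A p $ j * Dir (drho \<rho>) p h $ j))
      + (\<Sum>j\<in>UNIV. D p $ j * Dir Q p h $ j + Dir D p h $ j * Q p $ j))) (at p)"
    unfolding Psi_def[abs_def]
    by (intro has_derivative_add has_derivative_normal_part[OF Ah has_derivative_drho[OF p_in_V]]
        has_derivative_sum has_derivative_mult has_derivative_vec_nth Dd Qh p_in_U)
  have Psi0: "Psi w = 0" if w: "w \<in> U" "w \<in> frontier \<Omega>" for w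
  proof -
    have "w \<in> V" using w U_subset by blast
    have "(\<lambda>h. normal_part \<rho> w (Dir D w h) + (\<Sum>j\<in>UNIV. D w $ j * Dir (drho \<rho>) w h $ j)) (Yf w) = 0"
    proof (rule tangential_derivative_zero[OF w(2) has_derivative_normal_part[OF Dd[OF w(1)] has_derivative_drho[OF \<open>w \<in> V\<close>]]
          _ open_U w(1)])
      show "Dir \<rho> w (Yf w) = 0" using YfT w by (simp add: mem_Tb_iff)
      show "normal_part \<rho> x (D x) = 0" if "x \<in> U" "x \<in> frontier \<Omega>" for x
        using DE that cspan_near_kernel_eigvecs_subset_T10 by (force simp: T10_eq_normal_part)
    qed
    then show ?thesis by (simp add: Psi_def A_def Q_def)
  qed
  have "(\<lambda>h. (normal_part \<rho> p (Dir A p h) + (\<Sum>j\<in>UNIV. A p $ j * Dir (drho \<rho>) p h $ j))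
      + (\<Sum>j\<in>UNIV. D p $ j * Dir Q p h $ j + Dir D p h $ j * Q p $ j)) X = 0"
    by (rule tangential_derivative_zero[OF boundary_point Psid _ open_U p_in_U Psi0])
      (use X in \<open>simp add: mem_Tb_iff\<close>)
  then show ?thesis using Dp Yfp by (simp add: A_def[abs_def] Q_def eq_neg_iff_add_eq_0 algebra_simps)
qed

lemma Dir_levi_correction_zero:
  assumes DC: "Ck 1 U D" and Dp: "D p = 0"
    and DE: "\<forall>z\<in>U \<inter> frontier \<Omega>. D z \<in> cspan (near_kernel_eigvecs \<rho> z (\<mu> p) (\<mu> z))"
    and MC: "Ck 1 U M" and Mp: "M p \<in> Kker \<rho> p" and w: "w \<in> Tb \<rho> p"
  shows "Dir (\<lambda>z. levi \<rho> z (D z) (M z)) p w = 0"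
proof -
  have Dd: "(D has_derivative Dir D p) (at p)" and Md: "(M has_derivative Dir M p) (at p)"
    using Ck_has_derivative[OF DC p_in_U] Ck_has_derivative[OF MC p_in_U] by simp_all
  have "Dir (\<lambda>z. levi \<rho> z (D z) (M z)) p w = sesq (levi_matrix \<rho> p) (Dir D p w) (M p)"
    using has_derivative_imp_Dir_eq[OF sesq_has_derivative[OF has_derivative_levi_matrix[OF p_in_V] Dd Md]] Dp
    by (simp add: levi_eq_sesq)
  also have "\<dots> = 0"
  proof (rule levi_matrix_T10_Kker_zero[OF eigenvalues[OF boundary_point] Mp])
    show "normal_part \<rho> p (Dir D p w) = 0"
      using derivative_in_levi_kernel[OF Dd Dp DE w] by (simp add: Kker_def T10_eq_normal_part)
  qed
  finally show ?thesis .
qed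

lemma second_Dir_levi_at_zero:
  assumes DC: "Ck 2 U D" and Dp: "D p = 0" and MC: "Ck 2 U M" and YfC: "Ck 1 U Yf" and Yfp: "Yf p = Y"
  shows "Dir (\<lambda>z. Dir (\<lambda>z. levi \<rho> z (D z) (M z)) z (Yf z)) p X
    = sesq (Dir (levi_matrix \<rho>) p Y) (Dir D p X) (M p) + sesq (Dir (levi_matrix \<rho>) p X) (Dir D p Y) (M p)
      + sesq (levi_matrix \<rho> p) (Dir (\<lambda>z. Dir D z (Yf z)) p X) (M p)
      + sesq (levi_matrix \<rho> p) (Dir D p Y) (Dir M p X) + sesq (levi_matrix \<rho> p) (Dir D p X) (Dir M p Y)"
proof -
  let ?C = "levi_matrix \<rho>"
  define P A B where "P z = Dir ?C z (Yf z)" and "A z = Dir D z (Yf z)" and "B z = Dir M z (Yf z)" for z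
  have Ydp: "Yf differentiable (at p)" using YfC p_in_U by simp
  have Cd: "(?C has_derivative Dir ?C z) (at z)" if "z \<in> U" for z
    using has_derivative_levi_matrix that U_subset by blast
  have Dd: "(D has_derivative Dir D z) (at z)" and Md: "(M has_derivative Dir M z) (at z)" if "z \<in> U" for z
    using Ck_has_derivative[OF DC that] Ck_has_derivative[OF MC that] by simp_all
  have Ph: "(P has_derivative Dir P p) (at p)"
    unfolding P_def[abs_def] by (rule Ck_Dir_along_has_derivative[OF levi_matrix_C2 _ open_nbhd p_in_V Ydp]) simp
  have Ah: "(A has_derivative Dir A p) (at p)"
    unfolding A_def[abs_def] by (rule Ck_Dir_along_has_derivative[OF DC _ open_U p_in_U Ydp]) simp
  have Bh: "(B has_derivative Dir B p) (at p)"
    unfolding B_def[abs_def] by (rule Ck_Dir_along_has_derivative[OF MC _ open_U p_in_U Ydp]) simp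
  have "Dir (\<lambda>z. Dir (\<lambda>z. levi \<rho> z (D z) (M z)) z (Yf z)) p
      = Dir (\<lambda>z. sesq (P z) (D z) (M z) + sesq (?C z) (A z) (M z) + sesq (?C z) (D z) (B z)) p"
  proof (rule Dir_transform_within_open[OF open_U p_in_U])
    fix z assume "z \<in> U"
    show "Dir (\<lambda>z. levi \<rho> z (D z) (M z)) z (Yf z)
      = sesq (P z) (D z) (M z) + sesq (?C z) (A z) (M z) + sesq (?C z) (D z) (B z)"
      using has_derivative_imp_Dir_eq[OF sesq_has_derivative[OF Cd Dd Md, OF \<open>z \<in> U\<close> \<open>z \<in> U\<close> \<open>z \<in> U\<close>]]
      by (simp add: levi_eq_sesq P_def A_def B_def)
  qed
  then show ?thesis
    using has_derivative_imp_Dir_eq[OF has_derivative_add[OF has_derivative_add[OF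
          sesq_has_derivative[OF Ph Dd Md] sesq_has_derivative[OF Cd Ah Md]] sesq_has_derivative[OF Cd Dd Bh]],
        OF p_in_U p_in_U p_in_U p_in_U p_in_U p_in_U] Dp Yfp
    by (simp add: P_def A_def[abs_def] B_def)
qed

lemma second_Dir_levi_correction_zero:
  assumes DC: "Ck 2 U D" and Dp: "D p = 0"
    and DE: "\<forall>z\<in>U \<inter> frontier \<Omega>. D z \<in> cspan (near_kernel_eigvecs \<rho> z (\<mu> p) (\<mu> z))"
    and MC: "Ck 2 U M" and MT: "\<forall>z\<in>U \<inter> frontier \<Omega>. M z \<in> T10 \<rho> z"
    and MK: "M p \<in> KX \<Omega> \<rho> p X \<inter> KX \<Omega> \<rho> p Y"
    and YfC: "Ck 1 U Yf" and Yfp: "Yf p = Y" and YfT: "\<forall>z\<in>U \<inter> frontier \<Omega>. Yf z \<in> Tb \<rho> z"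
    and X: "X \<in> Tb \<rho> p" and Y: "Y \<in> Tb \<rho> p"
  shows "Dir (\<lambda>z. Dir (\<lambda>z. levi \<rho> z (D z) (M z)) z (Yf z)) p X = 0"
proof -
  let ?C = "levi_matrix \<rho>" and ?A = "Dir (\<lambda>z. Dir D z (Yf z)) p X"
  define a1 a2 where "a1 = Dir D p X" and "a2 = Dir D p Y"
  define S1 S2 where "S1 = Dir (\<lambda>z. proj_T10 \<rho> p z a1) p Y" and "S2 = Dir (\<lambda>z. proj_T10 \<rho> p z a2) p X"
  have K: "a1 \<in> Kker \<rho> p" "a2 \<in> Kker \<rho> p"
    using derivative_in_levi_kernel[OF Ck_has_derivative[OF DC p_in_U] Dp DE] X Y by (simp_all add: a1_def a2_def)
  have MC1: "Ck 1 U M" by (rule Ck_mono[OF _ MC]) simp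
  have "sesq (Dir ?C p Y) a1 (M p) + sesq (?C p) S1 (M p) + sesq (?C p) a1 (Dir M p Y) = 0"
    using KX_derivative_identity[OF MC1 MT _ Y K(1)] MK unfolding S1_def by blast
  then have e1: "sesq (Dir ?C p Y) a1 (M p) = - sesq (?C p) S1 (M p) - sesq (?C p) a1 (Dir M p Y)"
    by algebra
  have "sesq (Dir ?C p X) a2 (M p) + sesq (?C p) S2 (M p) + sesq (?C p) a2 (Dir M p X) = 0"
    using KX_derivative_identity[OF MC1 MT _ X K(2)] MK unfolding S2_def by blast
  then have e2: "sesq (Dir ?C p X) a2 (M p) = - sesq (?C p) S2 (M p) - sesq (?C p) a2 (Dir M p X)"
    by algebra
  have "Dir (\<lambda>z. Dir (\<lambda>z. levi \<rho> z (D z) (M z)) z (Yf z)) p X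
      = sesq (?C p) ?A (M p) - sesq (?C p) S1 (M p) - sesq (?C p) S2 (M p)"
    unfolding second_Dir_levi_at_zero[OF DC Dp MC YfC Yfp] a1_def[symmetric] a2_def[symmetric] e1 e2
    by algebra
  also have "\<dots> = sesq (?C p) (?A - S1 - S2) (M p)" by (simp add: sesq_diff_left)
  also have "\<dots> = 0"
  proof (rule levi_matrix_T10_Kker_zero[OF eigenvalues[OF boundary_point]])
    show "M p \<in> Kker \<rho> p" using MK KX_subset_Kker by blast
    have "normal_part \<rho> p a1 = 0" "normal_part \<rho> p a2 = 0"
      using K by (simp_all add: Kker_def T10_eq_normal_part)
    then show "normal_part \<rho> p (?A - S1 - S2) = 0"
      using normal_part_second_Dir[OF DC Dp DE YfC Yfp YfT X] normal_part_Dir_proj_T10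
      by (simp add: normal_part_diff S1_def S2_def a1_def a2_def)
  qed
  finally show ?thesis .
qed

end

section \<open>The tangential Hessian\<close>

lemma vec_eq_sum_real_axes:
  "w = (\<Sum>j\<in>UNIV. Re (w$j) *\<^sub>R axis j (1::complex) + Im (w$j) *\<^sub>R axis j \<i>)"
proof -
  have "(\<Sum>j\<in>UNIV. Re (w$j) *\<^sub>R axis j (1::complex) + Im (w$j) *\<^sub>R axis j \<i>) $ i = w $ i" for i
  proof -
    have "(\<Sum>j\<in>UNIV. Re (w$j) *\<^sub>R axis j (1::complex) + Im (w$j) *\<^sub>R axis j \<i>) $ i
        = (\<Sum>j\<in>UNIV. if i = j then Re (w$j) *\<^sub>R (1::complex) + Im (w$j) *\<^sub>R \<i> else 0)"
      by (simp add: sum_component axis_def if_distrib eq_commute[of i] cong: if_cong)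
    also have "\<dots> = w $ i" by (simp add: complex_eq_iff)
    finally show ?thesis .
  qed
  then show ?thesis by (simp add: vec_eq_iff)
qed

lemma Dir_eq_inner_grad:
  assumes "\<rho> differentiable (at z)"
  shows "Dir \<rho> z w = inner w (grad \<rho> z)"
proof -
  have lin: "linear (Dir \<rho> z)"
    using assms linear_frechet_derivative by (simp add: Dir_eq_frechet_derivative)
  have "Dir \<rho> z w = Dir \<rho> z (\<Sum>j\<in>UNIV. Re (w$j) *\<^sub>R axis j (1::complex) + Im (w$j) *\<^sub>R axis j \<i>)"
    using vec_eq_sum_real_axes[of w] by simp
  also have "\<dots> = (\<Sum>j\<in>UNIV. Re (w$j) * Dir \<rho> z (axis j 1) + Im (w$j) * Dir \<rho> z (axis j \<i>))"
    using lin by (simp add: linear_sum linear_add linear_scale)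
  also have "\<dots> = inner w (grad \<rho> z)"
    by (simp add: grad_def inner_vec_def inner_complex_def)
  finally show ?thesis .
qed

lemma tang_Tb:
  assumes "\<rho> differentiable (at z)" "Dir \<rho> z \<nu> = 1"
  shows "tang \<rho> z v \<in> Tb \<rho> z"
proof -
  have "grad \<rho> z \<noteq> 0" using Dir_eq_inner_grad[OF assms(1), of \<nu>] assms(2) by auto
  then have "inner (grad \<rho> z) (grad \<rho> z) \<noteq> 0" by simp
  then show ?thesis
    by (simp add: mem_Tb_iff Dir_eq_inner_grad[OF assms(1)] tang_def inner_diff_left)
qed

definition hess_b :: "(complex^'n::finite \<Rightarrow> real) \<Rightarrow> (complex^'n \<Rightarrow> complex^'n) \<Rightarrow> (complex^'n \<Rightarrow> complex^'n)
    \<Rightarrow> (complex^'n \<Rightarrow> complex) \<Rightarrow> complex^'n \<Rightarrow> complex" where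
  "hess_b \<rho> Xf Yf g p = Dir (\<lambda>z. Dir g z (Yf z)) p (Xf p) - Dir g p (tang \<rho> p (Dir Yf p (Xf p)))"

lemma tau4_eq_hess_b: "tau4 \<rho> Xf Yf L L' p = hess_b \<rho> Xf Yf (\<lambda>z. levi \<rho> z (L z) (L' z)) p"
  by (simp add: tau4_def hess_b_def Let_def)

definition twice_diff_along :: "'a::real_normed_vector set \<Rightarrow> ('a \<Rightarrow> 'a) \<Rightarrow> 'a \<Rightarrow> ('a \<Rightarrow> 'b::real_normed_vector) \<Rightarrow> bool" where
  "twice_diff_along U Yf p g \<longleftrightarrow> (\<forall>z\<in>U. g differentiable (at z)) \<and> (\<lambda>z. Dir g z (Yf z)) differentiable (at p)"

lemma Ck_imp_twice_diff_along:
  fixes g :: "'a::euclidean_space \<Rightarrow> 'b::real_normed_vector"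
  assumes "open U" "p \<in> U" "Ck 2 U g" "Yf differentiable (at p)"
  shows "twice_diff_along U Yf p g"
  unfolding twice_diff_along_def
  using Ck_has_derivative[OF assms(3)] Ck_Dir_along_has_derivative[OF assms(3) _ assms(1,2,4)]
  by (auto simp: differentiable_def)

lemma Dir_diff:
  "f differentiable (at z) \<Longrightarrow> g differentiable (at z) \<Longrightarrow> Dir (\<lambda>z. f z - g z) z v = Dir f z v - Dir g z v"
  using has_derivative_imp_Dir_eq[OF has_derivative_diff[OF differentiable_imp_has_derivative_Dir
        differentiable_imp_has_derivative_Dir]] by metis

lemma Dir_cnj: "f differentiable (at z) \<Longrightarrow> Dir (\<lambda>z. cnj (f z)) z v = cnj (Dir f z v)"
  using has_derivative_imp_Dir_eq[OF has_derivative_cnj[OF differentiable_imp_has_derivative_Dir]] by metis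

lemma twice_diff_along_diff:
  assumes U: "open U" "p \<in> U" and f: "twice_diff_along U Yf p f" and g: "twice_diff_along U Yf p g"
  shows "twice_diff_along U Yf p (\<lambda>z. f z - g z)"
  unfolding twice_diff_along_def
proof
  show "\<forall>z\<in>U. (\<lambda>z. f z - g z) differentiable (at z)"
    using f g by (simp add: twice_diff_along_def differentiable_diff)
  have "(\<lambda>z. Dir f z (Yf z) - Dir g z (Yf z)) differentiable (at p)"
    using f g by (simp add: twice_diff_along_def differentiable_diff)
  then show "(\<lambda>z. Dir (\<lambda>z. f z - g z) z (Yf z)) differentiable (at p)"
    by (rule differentiable_transform_within_open[OF U, rotated])
      (use f g in \<open>simp add: twice_diff_along_def Dir_diff\<close>)
qed

lemma twice_diff_along_cnj:
  assumes U: "open U" "p \<in> U" and f: "twice_diff_along U Yf p f"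
  shows "twice_diff_along U Yf p (\<lambda>z. cnj (f z))"
  unfolding twice_diff_along_def
proof
  show "\<forall>z\<in>U. (\<lambda>z. cnj (f z)) differentiable (at z)"
    using f by (simp add: twice_diff_along_def differentiable_cnj_iff)
  have "(\<lambda>z. cnj (Dir f z (Yf z))) differentiable (at p)"
    using f by (simp add: twice_diff_along_def differentiable_cnj_iff)
  then show "(\<lambda>z. Dir (\<lambda>z. cnj (f z)) z (Yf z)) differentiable (at p)"
    by (rule differentiable_transform_within_open[OF U, rotated])
      (use f in \<open>simp add: twice_diff_along_def Dir_cnj\<close>)
qed

lemma hess_b_diff:
  assumes U: "open U" "p \<in> U" and f: "twice_diff_along U Yf p f" and g: "twice_diff_along U Yf p g"
  shows "hess_b \<rho> Xf Yf (\<lambda>z. f z - g z) p = hess_b \<rho> Xf Yf f p - hess_b \<rho> Xf Yf g p"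
proof -
  have "Dir (\<lambda>z. Dir (\<lambda>z. f z - g z) z (Yf z)) p = Dir (\<lambda>z. Dir f z (Yf z) - Dir g z (Yf z)) p"
    by (rule Dir_transform_within_open[OF U]) (use f g in \<open>simp add: twice_diff_along_def Dir_diff\<close>)
  then show ?thesis
    using f g U(2) by (simp add: hess_b_def twice_diff_along_def Dir_diff)
qed

lemma hess_b_cnj:
  assumes U: "open U" "p \<in> U" and f: "twice_diff_along U Yf p f"
  shows "hess_b \<rho> Xf Yf (\<lambda>z. cnj (f z)) p = cnj (hess_b \<rho> Xf Yf f p)"
proof -
  have "Dir (\<lambda>z. Dir (\<lambda>z. cnj (f z)) z (Yf z)) p = Dir (\<lambda>z. cnj (Dir f z (Yf z))) p"
    by (rule Dir_transform_within_open[OF U]) (use f in \<open>simp add: twice_diff_along_def Dir_cnj\<close>)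
  then show ?thesis
    using f U(2) by (simp add: hess_b_def twice_diff_along_def Dir_cnj)
qed

lemma Ck_sesq:
  assumes "open S" "Ck k S C" "Ck k S A" "Ck k S B"
  shows "Ck k S (\<lambda>z. sesq (C z) (A z) (B z))"
proof -
  note nth = Ck_bounded_linear[OF assms(1) bounded_linear_vec_nth]
  have "Ck k S (\<lambda>z. C z $ j $ l)" for j l using nth[OF nth[OF assms(2)]] .
  moreover have "Ck k S (\<lambda>z. A z $ j)" for j using nth[OF assms(3)] .
  moreover have "Ck k S (\<lambda>z. B z $ l)" for l using nth[OF assms(4)] .
  ultimately show ?thesis
    unfolding sesq_def by (intro Ck_sum[OF assms(1)] Ck_mult[OF assms(1)] Ck_cnj[OF assms(1)]) auto
qed

section \<open>Well-definedness of \<open>\<tau>\<^sup>4\<close>\<close>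

lemma Ktilde_iff:
  "L \<in> Ktilde \<Omega> \<rho> \<mu> p U \<longleftrightarrow> Ck 2 U L \<and> (\<forall>z\<in>U \<inter> frontier \<Omega>. L z \<in> cspan (near_kernel_eigvecs \<rho> z (\<mu> p) (\<mu> z)))"
  by (simp add: Ktilde_def near_kernel_eigvecs_def)

lemma Ktilde_diff:
  assumes "open U" "L \<in> Ktilde \<Omega> \<rho> \<mu> p U" "L' \<in> Ktilde \<Omega> \<rho> \<mu> p U"
  shows "(\<lambda>z. L z - L' z) \<in> Ktilde \<Omega> \<rho> \<mu> p U"
  using assms by (auto simp: Ktilde_iff cspan_eq_span vec.span_diff intro: Ck_diff[OF assms(1)])

lemma Ktilde_T10: "L \<in> Ktilde \<Omega> \<rho> \<mu> p U \<Longrightarrow> z \<in> U \<inter> frontier \<Omega> \<Longrightarrow> L z \<in> T10 \<rho> z"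
  unfolding Ktilde_iff using cspan_near_kernel_eigvecs_subset_T10 by blast

context levi_boundary_point
begin

lemma tang_in_Tb: "tang \<rho> p v \<in> Tb \<rho> p"
  using tang_Tb differentiable_rho[OF boundary_point] transversal[OF boundary_point] by blast

lemma twice_diff_along_levi:
  assumes "Ck 2 U A" "Ck 2 U B" "Ck 1 U Yf"
  shows "twice_diff_along U Yf p (\<lambda>z. levi \<rho> z (A z) (B z))"
  unfolding levi_eq_sesq
  using Ck_sesq[OF open_U Ck_subset[OF levi_matrix_C2 U_subset] assms(1,2)] assms(3) p_in_U
  by (intro Ck_imp_twice_diff_along[OF open_U p_in_U]) auto

lemma hess_b_vanishing:
  assumes e: "twice_diff_along U Yf p e" "\<And>z. z \<in> U \<Longrightarrow> z \<in> frontier \<Omega> \<Longrightarrow> e z = 0"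
    and Yf: "tangent_field \<Omega> \<rho> U Yf" and X: "Xf p \<in> Tb \<rho> p"
  shows "hess_b \<rho> Xf Yf e p = 0"
proof -
  have de: "e differentiable (at z)" if "z \<in> U" for z using e(1) that by (simp add: twice_diff_along_def)
  have Ye: "Dir e z (Yf z) = 0" if "z \<in> U" "z \<in> frontier \<Omega>" for z
  proof (rule Dir_tangential_zero[OF that(2) de[OF that(1)] _ open_U that(1) e(2)])
    show "Dir \<rho> z (Yf z) = 0" using Yf that by (simp add: tangent_field_def mem_Tb_iff)
  qed
  have "Dir (\<lambda>z. Dir e z (Yf z)) p (Xf p) = 0"
  proof (rule Dir_tangential_zero[OF boundary_point _ _ open_U p_in_U Ye])
    show "(\<lambda>z. Dir e z (Yf z)) differentiable (at p)" using e(1) by (simp add: twice_diff_along_def)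
    show "Dir \<rho> p (Xf p) = 0" using X by (simp add: mem_Tb_iff)
  qed
  moreover have "Dir e p (tang \<rho> p (Dir Yf p (Xf p))) = 0"
  proof (rule Dir_tangential_zero[OF boundary_point de[OF p_in_U] _ open_U p_in_U e(2)])
    show "Dir \<rho> p (tang \<rho> p (Dir Yf p (Xf p))) = 0" using tang_in_Tb by (simp add: mem_Tb_iff)
  qed
  ultimately show ?thesis by (simp add: hess_b_def)
qed

lemma hess_b_levi_correction_zero:
  assumes D: "D \<in> Ktilde \<Omega> \<rho> \<mu> p U" "D p = 0"
    and M: "M \<in> Ktilde \<Omega> \<rho> \<mu> p U" "M p \<in> KX \<Omega> \<rho> p (Xf p) \<inter> KX \<Omega> \<rho> p (Yf p)"
    and Yf: "tangent_field \<Omega> \<rho> U Yf" and XY: "Xf p \<in> Tb \<rho> p" "Yf p \<in> Tb \<rho> p"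
  shows "hess_b \<rho> Xf Yf (\<lambda>z. levi \<rho> z (D z) (M z)) p = 0"
proof -
  have DC: "Ck 2 U D" and DE: "\<forall>z\<in>U \<inter> frontier \<Omega>. D z \<in> cspan (near_kernel_eigvecs \<rho> z (\<mu> p) (\<mu> z))"
    and MC: "Ck 2 U M" using D(1) M(1) by (simp_all add: Ktilde_iff)
  have YfC: "Ck 1 U Yf" and YfT: "\<forall>z\<in>U \<inter> frontier \<Omega>. Yf z \<in> Tb \<rho> z"
    using Yf by (simp_all add: tangent_field_def del: Ck.simps)
  have MT: "\<forall>z\<in>U \<inter> frontier \<Omega>. M z \<in> T10 \<rho> z" using Ktilde_T10[OF M(1)] by blast
  have "M p \<in> Kker \<rho> p" using M(2) KX_subset_Kker by blast
  then have "Dir (\<lambda>z. levi \<rho> z (D z) (M z)) p (tang \<rho> p (Dir Yf p (Xf p))) = 0"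
    using Dir_levi_correction_zero[OF Ck_mono[OF _ DC] D(2) DE Ck_mono[OF _ MC] _ tang_in_Tb] by simp
  moreover have "Dir (\<lambda>z. Dir (\<lambda>z. levi \<rho> z (D z) (M z)) z (Yf z)) p (Xf p) = 0"
    by (rule second_Dir_levi_correction_zero[OF DC D(2) DE MC MT M(2) YfC refl YfT XY])
  ultimately show ?thesis by (simp add: hess_b_def)
qed

lemma hess_b_levi_eq:
  assumes K: "L \<in> Ktilde \<Omega> \<rho> \<mu> p U" "L' \<in> Ktilde \<Omega> \<rho> \<mu> p U" "Lt \<in> Ktilde \<Omega> \<rho> \<mu> p U" "Lt' \<in> Ktilde \<Omega> \<rho> \<mu> p U"
    and eq: "L p = Lt p" "L' p = Lt' p"
    and KX: "L p \<in> KX \<Omega> \<rho> p (Xf p) \<inter> KX \<Omega> \<rho> p (Yf p)" "L' p \<in> KX \<Omega> \<rho> p (Xf p) \<inter> KX \<Omega> \<rho> p (Yf p)"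
    and Yf: "tangent_field \<Omega> \<rho> U Yf" and XY: "Xf p \<in> Tb \<rho> p" "Yf p \<in> Tb \<rho> p"
  shows "hess_b \<rho> Xf Yf (\<lambda>z. levi \<rho> z (L z) (L' z)) p = hess_b \<rho> Xf Yf (\<lambda>z. levi \<rho> z (Lt z) (Lt' z)) p"
proof -
  define D D' where "D z = L z - Lt z" and "D' z = L' z - Lt' z" for z
  define g gt h h' where "g z = levi \<rho> z (L z) (L' z)" and "gt z = levi \<rho> z (Lt z) (Lt' z)"
    and "h z = levi \<rho> z (D z) (L' z)" and "h' z = levi \<rho> z (D' z) (Lt z)" for z
  have DK: "D \<in> Ktilde \<Omega> \<rho> \<mu> p U" "D' \<in> Ktilde \<Omega> \<rho> \<mu> p U"
    unfolding D_def[abs_def] D'_def[abs_def] using Ktilde_diff[OF open_U] K by blast+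
  have C2: "Ck 2 U L" "Ck 2 U L'" "Ck 2 U Lt" "Ck 2 U D" "Ck 2 U D'"
    using K DK by (simp_all add: Ktilde_iff)
  have YfC: "Ck 1 U Yf" using Yf by (simp add: tangent_field_def del: Ck.simps)
  note reg = twice_diff_along_levi[OF _ _ YfC]
  have g: "twice_diff_along U Yf p g" and gt: "twice_diff_along U Yf p gt"
    and h: "twice_diff_along U Yf p h" and h': "twice_diff_along U Yf p h'"
    unfolding g_def[abs_def] gt_def[abs_def] h_def[abs_def] h'_def[abs_def]
    using reg C2 K by (auto simp: Ktilde_iff)
  have gg: "twice_diff_along U Yf p (\<lambda>z. g z - gt z)" by (rule twice_diff_along_diff[OF open_U p_in_U g gt])
  have ggh: "twice_diff_along U Yf p (\<lambda>z. g z - gt z - h z)" by (rule twice_diff_along_diff[OF open_U p_in_U gg h])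
  have ch: "twice_diff_along U Yf p (\<lambda>z. cnj (h' z))" by (rule twice_diff_along_cnj[OF open_U p_in_U h'])
  define e where "e z = g z - gt z - h z - cnj (h' z)" for z
  have e: "twice_diff_along U Yf p e"
    unfolding e_def[abs_def] by (rule twice_diff_along_diff[OF open_U p_in_U ggh ch])
  have e0: "e z = 0" if "z \<in> U" "z \<in> frontier \<Omega>" for z
  proof -
    have "Lt z \<in> T10 \<rho> z" "D' z \<in> T10 \<rho> z" using Ktilde_T10 K(3) DK(2) that by blast+
    then show ?thesis
      using levi_diff_eq[OF eigenvalues[OF that(2)], of "Lt z" "L' z" "Lt' z" "L z"]
      by (simp add: e_def g_def gt_def h_def h'_def D_def D'_def)
  qed
  have "hess_b \<rho> Xf Yf e p = 0"
    by (rule hess_b_vanishing[where Xf = Xf, OF e e0 Yf XY(1)])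
  moreover have "hess_b \<rho> Xf Yf h p = 0"
    unfolding h_def[abs_def]
    by (rule hess_b_levi_correction_zero[where Xf = Xf, OF DK(1) _ K(2) KX(2) Yf XY]) (simp add: D_def eq)
  moreover have "hess_b \<rho> Xf Yf h' p = 0"
    unfolding h'_def[abs_def]
    by (rule hess_b_levi_correction_zero[where Xf = Xf, OF DK(2) _ K(3) _ Yf XY]) (use eq KX(1) in \<open>simp_all add: D'_def\<close>)
  moreover have "hess_b \<rho> Xf Yf e p = hess_b \<rho> Xf Yf g p - hess_b \<rho> Xf Yf gt p - hess_b \<rho> Xf Yf h p
      - cnj (hess_b \<rho> Xf Yf h' p)"
  proof -
    have "hess_b \<rho> Xf Yf e p = hess_b \<rho> Xf Yf (\<lambda>z. g z - gt z - h z) p - hess_b \<rho> Xf Yf (\<lambda>z. cnj (h' z)) p"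
      unfolding e_def[abs_def] by (rule hess_b_diff[OF open_U p_in_U ggh ch])
    then show ?thesis
      using hess_b_diff[OF open_U p_in_U gg h] hess_b_diff[OF open_U p_in_U g gt] hess_b_cnj[OF open_U p_in_U h']
      by simp
  qed
  ultimately show ?thesis by (simp add: g_def[symmetric] gt_def[symmetric])
qed

end

lemma defining_function_levi_boundary_point:
  assumes "open \<Omega>" "defining_function \<Omega> \<rho> V" "p \<in> frontier \<Omega>"
    and "\<forall>z \<in> frontier \<Omega>. levi_eigenvalues \<rho> z (\<mu> z)" and "open U" "p \<in> U" "U \<subseteq> V"
    and "\<forall>z \<in> U \<inter> frontier \<Omega>. \<forall>j < CARD('n) - 1. \<forall>k < CARD('n) - 1.
           \<mu> p k \<noteq> 0 \<longrightarrow> \<mu> p j = 0 \<longrightarrow> \<mu> z k \<noteq> \<mu> z j"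
  shows "levi_boundary_point \<Omega> V \<rho> \<mu> p (U :: (complex^'n::finite) set)"
proof -
  have V: "open V" "frontier \<Omega> \<subseteq> V" and C4: "Ck 4 V \<rho>"
    and sgn: "\<forall>z\<in>V. z \<in> \<Omega> \<longleftrightarrow> \<rho> z < 0" and dn: "\<forall>z\<in>frontier \<Omega>. dnorm \<rho> z = 1"
    using assms(2) unfolding defining_function_def by blast+
  have C4': "Ck (Suc 3) V \<rho>" and C4'': "Ck (Suc (Suc 2)) V \<rho>" using C4 by (simp_all add: numeral_eq_Suc)
  have diff: "\<rho> differentiable (at z)" if "z \<in> V" for z
    using Ck_Suc_has_derivative[OF C4' that] differentiableI by blast
  have "continuous_on V \<rho>" using Ck_mono[OF _ C4, of 0] by simp
  moreover have "Ck 2 V (drho \<rho>)" by (rule Ck_mono[OF _ Ck_drho[OF V(1) C4']]) simp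
  moreover have "Ck 2 V (levi_matrix \<rho>)" by (rule Ck_levi_matrix[OF V(1) C4''])
  moreover have "drho_sq \<rho> p \<noteq> 0"
    using drho_sq_nonzero dnorm_one_imp_drho_nonzero diff V(2) dn assms(3) by blast
  ultimately show ?thesis
    using assms V sgn dn diff dnorm_one_imp_transversal
    by unfold_locales blast+
qed

theorem mainTheorem4:
  fixes \<Omega> V U :: "(complex^'n::finite) set"
    and \<rho> :: "complex^'n \<Rightarrow> real"
    and \<mu> :: "complex^'n \<Rightarrow> nat \<Rightarrow> real"
    and p X Y :: "complex^'n"
    and Xf Yf L L' Lt Lt' :: "complex^'n \<Rightarrow> complex^'n"
  assumes "open \<Omega>" and "connected \<Omega>"
    and "defining_function \<Omega> \<rho> V"
    and "p \<in> frontier \<Omega>"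
    and "X \<in> Tb \<rho> p" and "Y \<in> Tb \<rho> p"
    and "\<forall>z \<in> frontier \<Omega>. levi_eigenvalues \<rho> z (\<mu> z)"
    and "open U" and "p \<in> U" and "U \<subseteq> V"
    and "\<forall>z \<in> U \<inter> frontier \<Omega>. \<forall>j < CARD('n) - 1. \<forall>k < CARD('n) - 1.
           \<mu> p k \<noteq> 0 \<longrightarrow> \<mu> p j = 0 \<longrightarrow> \<mu> z k \<noteq> \<mu> z j"
    and "tangent_field \<Omega> \<rho> U Xf" and "Xf p = X"
    and "tangent_field \<Omega> \<rho> U Yf" and "Yf p = Y"
    and "L \<in> Ktilde \<Omega> \<rho> \<mu> p U" and "L' \<in> Ktilde \<Omega> \<rho> \<mu> p U"
    and "Lt \<in> Ktilde \<Omega> \<rho> \<mu> p U" and "Lt' \<in> Ktilde \<Omega> \<rho> \<mu> p U"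
    and "L p = Lt p" and "L' p = Lt' p"
    and "L p \<in> KX \<Omega> \<rho> p X \<inter> KX \<Omega> \<rho> p Y"
    and "L' p \<in> KX \<Omega> \<rho> p X \<inter> KX \<Omega> \<rho> p Y"
  shows "tau4 \<rho> Xf Yf L L' p = tau4 \<rho> Xf Yf Lt Lt' p"
proof -
  interpret levi_boundary_point \<Omega> V \<rho> \<mu> p U
    by (rule defining_function_levi_boundary_point) (use assms in auto)
  show ?thesis
    unfolding tau4_eq_hess_b by (rule hess_b_levi_eq) (use assms in auto)
qed

end
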